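(* Assume conditions (C), (D1), (D2), (E1), (E2), and let $u_n(k)=y_n(k)-m_ny_n(k-1)-\omega_n$. Then $$\frac1{nc_n}\sum_{k=1}^nu_n^2(k)\xrightarrow{p}0\qquad(n\to\infty).$$
   Context: For each $n$, $\{\xi_n(k,j)\}$, $\{\eta_n(k)\}$ are independent families of i.i.d. $\mathbb N$-valued random variables with generating functions $g_n,h_n$, finite means $m_n,\omega_n$; $y_n(0)=0$, $y_n(k)=\sum_{j=1}^{y_n(k-1)}\xi_n(k,j)+\eta_n(k)$. $(c_n)$ positive; $G_n(\lambda)=n^2[(1-m_n\lambda/c_n)-g_n(1-\lambda/c_n)]$, $H_n(\lambda)=n[(1-\omega_n\lambda/c_n)-h_n(1-\lambda/c_n)]$. Conditions: (C) $n/c_n\to\infty$, $n/c_n^2\to\gamma_0\ge0$; (D1) $n(m_n-1)\to a$; (D2) $G_n$ uniformly Lipschitz on bounded intervals, converging to a continuous function; (E1) $\omega_n\to\omega\ge0$; (E2) $H_n$ uniformly Lipschitz on bounded intervals, converging to a continuous function. *)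

theory Defs
  imports "HOL-Probability.Probability"
begin

definition pgf :: "nat pmf \<Rightarrow> real \<Rightarrow> real" where
  "pgf p s = measure_pmf.expectation p (\<lambda>k. s ^ k)"

definition pmean :: "nat pmf \<Rightarrow> real" where
  "pmean p = measure_pmf.expectation p real"

fun bpi :: "(nat \<Rightarrow> nat \<Rightarrow> 'a \<Rightarrow> nat) \<Rightarrow> (nat \<Rightarrow> 'a \<Rightarrow> nat) \<Rightarrow> nat \<Rightarrow> 'a \<Rightarrow> nat" where
  "bpi xi eta 0 x = 0"
| "bpi xi eta (Suc k) x = (\<Sum>j\<in>{1..bpi xi eta k x}. xi (Suc k) j x) + eta (Suc k) x"

end

theory Submission
  imports Defs
begin

text \<open>Write \<open>u(k) = y(k) - m y(k-1) - \<omega>\<close> and truncate all offspring and immigration variables at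
  \<open>T = R c\<close>. Unless some generation up to \<open>n\<close> exceeds \<open>n\<^sup>3\<close> or some variable used reaches \<open>T\<close>,
  \<open>u(k)\<close> is a centred truncated random sum over the \<open>y(k-1)\<close> parents, plus the truncation defect
  \<open>-(m - m\<^sub>T) y(k-1)\<close>, plus a centred truncated immigration, plus \<open>-(\<omega> - \<omega>\<^sub>T)\<close>.  Wald's identities
  and Markov's inequality bound each part in terms of \<open>E y(k) = O(n)\<close> and of the tail, the mean
  defect and the variance of the truncated laws.  These are all controlled by the pgf gap
  \<open>E[(1 - 1/c)\<^sup>\<xi> - 1 + \<xi>/c] = -G\<^sub>n(1)/n\<^sup>2\<close> (resp. \<open>-H\<^sub>n(1)/n\<close>), which the Lipschitz conditions make
  \<open>O(1/n\<^sup>2)\<close> (resp. \<open>O(1/n)\<close>).  The result is \<open>P(\<Sum> u(k)\<^sup>2 > \<epsilon> n c) \<le> K/R + o(1)\<close> for every \<open>R\<close>.\<close>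

section \<open>The pgf gap\<close>

definition pgf_gap :: "real \<Rightarrow> nat \<Rightarrow> real" where
  "pgf_gap t k = (1 - t) ^ k - 1 + real k * t"

lemma mult_power_one_minus_le:
  fixes t :: real assumes "0 \<le> t" "t \<le> 1"
  shows "real k * t * (1 - t) ^ k \<le> 1 - (1 - t) ^ k"
proof (induction k)
  case 0 then show ?case by simp
next
  case (Suc k)
  have "(1 - t) ^ Suc k \<le> (1 - t) ^ k"
    using assms by (simp add: mult_left_le_one_le)
  then have "real (Suc k) * t * (1 - t) ^ Suc k \<le> real k * t * (1 - t) ^ k + t * (1 - t) ^ k"
    using assms by (simp add: algebra_simps add_mono mult_left_mono)
  also have "\<dots> \<le> 1 - (1 - t) ^ Suc k" using Suc by (simp add: algebra_simps)
  finally show ?case .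
qed

lemma pgf_gap_Suc: "pgf_gap t (Suc k) = pgf_gap t k + t * (1 - (1 - t) ^ k)"
  by (simp add: pgf_gap_def algebra_simps)

lemma pgf_gap_ge_quadratic:
  fixes t :: real assumes "0 \<le> t" "t \<le> 1"
  shows "t\<^sup>2 * (1 - t) ^ k * (real k * (real k - 1)) / 2 \<le> pgf_gap t k"
proof (induction k)
  case 0 then show ?case by (simp add: pgf_gap_def)
next
  case (Suc k)
  have decr: "(1 - t) ^ Suc k \<le> (1 - t) ^ k"
    using assms by (simp add: mult_left_le_one_le)
  have kk: "0 \<le> real k * (real k - 1)" by (cases k) auto
  define w where "w = (1 - t) ^ Suc k"
  have "t\<^sup>2 * w * (real (Suc k) * (real (Suc k) - 1)) / 2
      = t\<^sup>2 * w * (real k * (real k - 1)) / 2 + t * (real k * t * w)"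
    by (simp add: field_simps power2_eq_square)
  also have "\<dots> \<le> t\<^sup>2 * (1 - t) ^ k * (real k * (real k - 1)) / 2 + t * (real k * t * (1 - t) ^ k)"
    using decr assms kk unfolding w_def
    by (intro add_mono divide_right_mono mult_left_mono mult_right_mono) auto
  also have "\<dots> \<le> pgf_gap t (Suc k)"
    unfolding pgf_gap_Suc
    using Suc mult_power_one_minus_le[OF assms, of k] assms by (intro add_mono mult_left_mono) auto
  finally show ?case unfolding w_def .
qed

lemma pgf_gap_nonneg:
  fixes t :: real assumes "0 \<le> t" "t \<le> 1"
  shows "0 \<le> pgf_gap t k"
proof -
  have "0 \<le> real k * (real k - 1)" by (cases k) auto
  then have "0 \<le> t\<^sup>2 * (1 - t) ^ k * (real k * (real k - 1)) / 2" using assms by simp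
  then show ?thesis using pgf_gap_ge_quadratic[OF assms, of k] by linarith
qed

lemma exp_neg_four_le_power_one_minus:
  fixes c :: real assumes c: "2 \<le> c" and k: "real k \<le> 2 * c"
  shows "exp (-4) \<le> (1 - 1/c) ^ k"
proof -
  let ?t = "1/c"
  have t: "0 \<le> ?t" "?t \<le> 1/2" using c by auto
  have "real k * (?t + 2 * ?t\<^sup>2) \<le> 2 * c * (?t + 2 * ?t\<^sup>2)"
    using k t by (intro mult_right_mono) auto
  also have "\<dots> \<le> 4" using c by (simp add: field_simps power2_eq_square)
  finally have "-4 \<le> real k * (- ?t - 2 * ?t\<^sup>2)" by (simp add: algebra_simps)
  also have "\<dots> \<le> real k * ln (1 - ?t)"
    using ln_one_minus_pos_lower_bound[OF t] by (intro mult_left_mono) auto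
  finally have "exp (-4) \<le> exp (real k * ln (1 - ?t))" by simp
  also have "\<dots> = (1 - ?t) ^ k" using c by (simp add: exp_of_nat_mult)
  finally show ?thesis .
qed

lemma real_le_pgf_gap:
  fixes c :: real assumes c: "1 \<le> c" and k: "2 * c \<le> real k"
  shows "real k \<le> 2 * c * pgf_gap (1/c) k"
proof -
  have "0 \<le> (1 - 1/c) ^ k" using c by simp
  then have "real k / c - 1 \<le> pgf_gap (1/c) k" by (simp add: pgf_gap_def)
  moreover have "2 \<le> real k / c" using c k by (simp add: field_simps)
  ultimately have "real k / c \<le> 2 * pgf_gap (1/c) k" by linarith
  then show ?thesis using c by (simp add: field_simps)
qed

lemma one_le_pgf_gap_tail:
  fixes c R :: real assumes c: "1 \<le> c" and R: "2 \<le> R" and k: "R * c \<le> real k"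
  shows "1 \<le> (2 / R) * pgf_gap (1/c) k"
proof -
  have "2 * c \<le> R * c" using R c by (intro mult_right_mono) auto
  then have "R * c \<le> 2 * c * pgf_gap (1/c) k"
    using real_le_pgf_gap[OF c, of k] k by linarith
  then have "R \<le> 2 * pgf_gap (1/c) k" using c by simp
  then show ?thesis using R by (simp add: field_simps)
qed

lemma falling_square_le_pgf_gap:
  fixes c R :: real assumes c: "2 \<le> c" and R: "2 \<le> R" and k: "real k < R * c"
  shows "real k * (real k - 1) \<le> (2 * exp 4 + 2 * R) * c\<^sup>2 * pgf_gap (1/c) k"
proof -
  have t: "0 \<le> 1/c" "1/c \<le> 1" using c by auto
  have gap: "0 \<le> pgf_gap (1/c) k" by (rule pgf_gap_nonneg[OF t])
  have kk: "0 \<le> real k * (real k - 1)" by (cases k) auto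
  show ?thesis
  proof (cases "real k \<le> 2 * c")
    case True
    have "(1/c)\<^sup>2 * exp (-4) * (real k * (real k - 1)) / 2 \<le> (1/c)\<^sup>2 * (1 - 1/c) ^ k * (real k * (real k - 1)) / 2"
      using exp_neg_four_le_power_one_minus[OF c True] kk
      by (intro divide_right_mono mult_right_mono mult_left_mono) auto
    also have "\<dots> \<le> pgf_gap (1/c) k" by (rule pgf_gap_ge_quadratic[OF t])
    finally have "real k * (real k - 1) \<le> 2 * exp 4 * c\<^sup>2 * pgf_gap (1/c) k"
      using c by (simp add: field_simps exp_minus power2_eq_square)
    also have "\<dots> \<le> (2 * exp 4 + 2 * R) * c\<^sup>2 * pgf_gap (1/c) k"
      using gap R by (intro mult_right_mono) auto
    finally show ?thesis .
  next
    case False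
    then have lin: "real k \<le> 2 * c * pgf_gap (1/c) k" using c by (intro real_le_pgf_gap) auto
    have "real k * (real k - 1) \<le> real k * real k" by (intro mult_left_mono) auto
    also have "\<dots> \<le> (R * c) * (2 * c * pgf_gap (1/c) k)"
      using k lin by (intro mult_mono) auto
    also have "\<dots> \<le> (2 * exp 4 + 2 * R) * c\<^sup>2 * pgf_gap (1/c) k"
      using gap c by (simp add: power2_eq_square mult_right_mono algebra_simps)
    finally show ?thesis .
  qed
qed

section \<open>Generations\<close>

lemma bpi_eq_sum_lessThan:
  "1 \<le> k \<Longrightarrow> bpi X E k x = (\<Sum>j<bpi X E (k - 1) x. X k (Suc j) x) + E k x"
  by (cases k) (auto simp: sum.atLeast1_atMost_eq)

lemma bpi_cong:
  assumes "\<And>i j. 1 \<le> i \<Longrightarrow> i \<le> k \<Longrightarrow> 1 \<le> j \<Longrightarrow> X i j x = X' i j x'"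
    and "\<And>i. 1 \<le> i \<Longrightarrow> i \<le> k \<Longrightarrow> E i x = E' i x'"
  shows "bpi X E k x = bpi X' E' k x'"
  using assms by (induction k) auto

lemma measurable_sum_atLeastAtMost_nat:
  fixes N :: nat
  assumes "\<And>j. f j \<in> M \<rightarrow>\<^sub>M count_space (UNIV::nat set)"
  shows "(\<lambda>x. \<Sum>j\<in>{1..N}. f j x) \<in> M \<rightarrow>\<^sub>M count_space UNIV"
proof (induction N)
  case 0 then show ?case by simp
next
  case (Suc N)
  have "(\<lambda>x. (\<Sum>j\<in>{1..N}. f j x) + f (Suc N) x) \<in> M \<rightarrow>\<^sub>M count_space UNIV"
    using Suc assms[of "Suc N"] by measurable
  then show ?case by (simp add: add.commute)
qed

lemma bpi_measurable:
  assumes "\<And>i j. 1 \<le> i \<Longrightarrow> i \<le> k \<Longrightarrow> 1 \<le> j \<Longrightarrow> X i j \<in> M \<rightarrow>\<^sub>M count_space UNIV"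
    and "\<And>i. 1 \<le> i \<Longrightarrow> i \<le> k \<Longrightarrow> E i \<in> M \<rightarrow>\<^sub>M count_space UNIV"
  shows "bpi X E k \<in> M \<rightarrow>\<^sub>M count_space UNIV"
  using assms
proof (induction k)
  case 0 then show ?case by simp
next
  case (Suc k)
  have prev: "bpi X E k \<in> M \<rightarrow>\<^sub>M count_space UNIV" using Suc.prems by (intro Suc.IH) auto
  \<comment> \<open>\<open>X (Suc k) 0\<close> need not be measurable, so it is replaced by \<open>0\<close> before summing\<close>
  let ?X = "\<lambda>j. if 1 \<le> j then X (Suc k) j else (\<lambda>x. 0)"
  have "\<And>N. (\<lambda>x. \<Sum>j\<in>{1..N}. ?X j x) \<in> M \<rightarrow>\<^sub>M count_space UNIV"
    using Suc.prems by (intro measurable_sum_atLeastAtMost_nat) auto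
  then have "(\<lambda>x. \<Sum>j\<in>{1..bpi X E k x}. ?X j x) \<in> M \<rightarrow>\<^sub>M count_space UNIV"
    by (rule measurable_compose_countable[OF _ prev])
  moreover have "(\<lambda>x. \<Sum>j\<in>{1..bpi X E k x}. ?X j x) = (\<lambda>x. \<Sum>j\<in>{1..bpi X E k x}. X (Suc k) j x)"
    by (intro ext sum.cong) auto
  moreover have "E (Suc k) \<in> M \<rightarrow>\<^sub>M count_space UNIV" using Suc.prems by auto
  ultimately show ?case by simp
qed

text \<open>\<open>y(k-1)\<close> is a measurable function of the variables of the generations before \<open>k\<close>, a block of
  the independent family disjoint from the offspring variables \<open>\<xi>(k, j)\<close>.\<close>

lemma indep_vars_bpi_offspring:
  fixes M :: "'a measure" and X :: "nat \<Rightarrow> nat \<Rightarrow> 'a \<Rightarrow> nat" and E :: "nat \<Rightarrow> 'a \<Rightarrow> nat"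
  assumes "prob_space M"
    and indep: "prob_space.indep_vars M (\<lambda>_. count_space UNIV)
        (\<lambda>i. case i of Inl (k, j) \<Rightarrow> X k j | Inr k \<Rightarrow> E k)
        ({(k, j). 1 \<le> k \<and> 1 \<le> j} <+> {k. 1 \<le> k})"
    and k: "1 \<le> k"
  shows "prob_space.indep_vars M (\<lambda>_. count_space UNIV)
     (\<lambda>i. case i of None \<Rightarrow> bpi X E (k - 1) | Some j \<Rightarrow> X k (Suc j)) UNIV"
proof -
  interpret prob_space M by fact
  define V where "V = (\<lambda>i. case i of Inl (k, j) \<Rightarrow> X k j | Inr k \<Rightarrow> E k)"
  define P where "P = Inl ` {(i::nat, j::nat). 1 \<le> i \<and> i < k \<and> 1 \<le> j} \<union> Inr ` {i. 1 \<le> i \<and> i < k}"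
  define K where "K = (\<lambda>i. case i of None \<Rightarrow> P | Some j \<Rightarrow> {Inl (k, Suc j)})"
  have restricted: "indep_vars (\<lambda>i. PiM (K i) (\<lambda>_. count_space UNIV)) (\<lambda>i \<omega>. restrict (\<lambda>i. V i \<omega>) (K i)) UNIV"
  proof (rule indep_vars_restrict)
    show "indep_vars (\<lambda>_. count_space UNIV) V ({(k, j). 1 \<le> k \<and> 1 \<le> j} <+> {k. 1 \<le> k})"
      using indep by (simp add: V_def)
    show "disjoint_family_on K UNIV"
      unfolding disjoint_family_on_def K_def P_def by (auto split: option.splits)
    show "K i \<subseteq> {(k, j). 1 \<le> k \<and> 1 \<le> j} <+> {k. 1 \<le> k}" for i
      using k by (cases i) (auto simp: K_def P_def)
  qed
  define Y where "Y = (\<lambda>i::nat option. case i of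
      None \<Rightarrow> bpi (\<lambda>i j r. r (Inl (i, j))) (\<lambda>i r. r (Inr i)) (k - 1)
    | Some j \<Rightarrow> (\<lambda>r. r (Inl (k, Suc j))))"
  have "Y i \<in> PiM (K i) (\<lambda>_. count_space UNIV) \<rightarrow>\<^sub>M count_space UNIV" for i
  proof (cases i)
    case None
    have "bpi (\<lambda>i j r. r (Inl (i, j))) (\<lambda>i r. r (Inr i)) (k - 1) \<in> PiM P (\<lambda>_. count_space UNIV) \<rightarrow>\<^sub>M count_space UNIV"
      by (rule bpi_measurable; rule measurable_component_singleton) (use k in \<open>auto simp: P_def\<close>)
    then show ?thesis using None by (simp add: Y_def K_def)
  qed (simp add: Y_def K_def)
  then have "indep_vars (\<lambda>_. count_space UNIV) (\<lambda>i x. Y i (restrict (\<lambda>i. V i x) (K i))) UNIV"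
    by (rule indep_vars_compose2[OF restricted])
  moreover have "(\<lambda>x. Y i (restrict (\<lambda>i. V i x) (K i))) =
      (case i of None \<Rightarrow> bpi X E (k - 1) | Some j \<Rightarrow> X k (Suc j))" for i
  proof (cases i)
    case None
    have "Y None (restrict (\<lambda>i. V i x) (K None)) = bpi X E (k - 1) x" for x
      unfolding Y_def K_def option.case by (rule bpi_cong) (use k in \<open>auto simp: P_def V_def\<close>)
    then show ?thesis using None by auto
  qed (simp add: Y_def K_def V_def)
  ultimately show ?thesis by simp
qed

section \<open>Random sums\<close>

text \<open>Used with \<open>Y = y(k-1)\<close> and \<open>Z j = \<xi>(k, j+1)\<close>, whose random sum is the offspring part of \<open>y(k)\<close>.\<close>

locale random_sum = prob_space M for M :: "'a measure" +
  fixes Y :: "'a \<Rightarrow> nat" and Z :: "nat \<Rightarrow> 'a \<Rightarrow> nat" and p :: "nat pmf"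
  assumes indep_count_summands:
      "indep_vars (\<lambda>_. count_space UNIV) (\<lambda>i. case i of None \<Rightarrow> Y | Some j \<Rightarrow> Z j) UNIV"
    and distr_summand: "\<And>j. distr M (count_space UNIV) (Z j) = measure_pmf p"
begin

lemma count_measurable[measurable]: "Y \<in> M \<rightarrow>\<^sub>M count_space UNIV"
  using indep_count_summands unfolding indep_vars_def by (metis UNIV_I option.simps(4))

lemma summand_measurable[measurable]: "Z j \<in> M \<rightarrow>\<^sub>M count_space UNIV"
  using indep_count_summands unfolding indep_vars_def by (metis UNIV_I option.simps(5))

lemma indep_vars_compose_count_summands:
  fixes h g :: "nat \<Rightarrow> 'b::topological_space"
  shows "indep_vars (\<lambda>_. borel) (\<lambda>i. case i of None \<Rightarrow> (\<lambda>x. h (Y x)) | Some j \<Rightarrow> (\<lambda>x. g (Z j x))) UNIV"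
proof -
  define F where "F = (\<lambda>i::nat option. case i of None \<Rightarrow> h | Some j \<Rightarrow> g)"
  have "indep_vars (\<lambda>_. borel) (\<lambda>i x. F i ((case i of None \<Rightarrow> Y | Some j \<Rightarrow> Z j) x)) UNIV"
    by (rule indep_vars_compose2[OF indep_count_summands]) auto
  then show ?thesis
    by (rule indep_vars_cong[THEN iffD1, rotated 3]) (auto simp: F_def split: option.splits)
qed

lemma integral_summand: "(\<integral>x. g (Z j x) \<partial>M) = measure_pmf.expectation p (g :: nat \<Rightarrow> real)"
  using integral_distr[of "Z j" M "count_space UNIV" g] by (simp add: distr_summand)

lemma nn_integral_summand: "(\<integral>\<^sup>+x. f (Z j x) \<partial>M) = (\<integral>\<^sup>+z. f z \<partial>measure_pmf p)"
  using nn_integral_distr[of "Z j" M "count_space UNIV" f] by (simp add: distr_summand)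

lemma nn_integral_count_mult_summand:
  fixes h f :: "nat \<Rightarrow> real" assumes "\<And>y. 0 \<le> h y" "\<And>z. 0 \<le> f z"
  shows "(\<integral>\<^sup>+x. ennreal (h (Y x) * f (Z j x)) \<partial>M) =
     (\<integral>\<^sup>+x. ennreal (h (Y x)) \<partial>M) * (\<integral>\<^sup>+z. ennreal (f z) \<partial>measure_pmf p)"
proof -
  let ?H = "\<lambda>i. case i of None \<Rightarrow> (\<lambda>x. ennreal (h (Y x))) | Some j \<Rightarrow> (\<lambda>x. ennreal (f (Z j x)))"
  have "indep_vars (\<lambda>_. borel) ?H {None, Some j}"
    by (rule indep_vars_subset[OF indep_vars_compose_count_summands]) auto
  then have "(\<integral>\<^sup>+x. (\<Prod>i\<in>{None, Some j}. ?H i x) \<partial>M) = (\<Prod>i\<in>{None, Some j}. \<integral>\<^sup>+x. ?H i x \<partial>M)"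
    by (intro indep_vars_nn_integral) auto
  then show ?thesis using nn_integral_summand[of "\<lambda>z. ennreal (f z)" j] by (simp add: ennreal_mult assms)
qed

lemma integral_count_mult_prod_summands:
  fixes h g :: "nat \<Rightarrow> real"
  assumes h: "\<And>y. \<bar>h y\<bar> \<le> Bh" and g: "\<And>z. \<bar>g z\<bar> \<le> Bg" and "finite J"
  shows "(\<integral>x. h (Y x) * (\<Prod>j\<in>J. g (Z j x)) \<partial>M) =
     (\<integral>x. h (Y x) \<partial>M) * measure_pmf.expectation p g ^ card J"
proof -
  let ?H = "\<lambda>i. case i of None \<Rightarrow> (\<lambda>x. h (Y x)) | Some j \<Rightarrow> (\<lambda>x. g (Z j x))"
  let ?I = "insert None (Some ` J)"
  have "indep_vars (\<lambda>_. borel) ?H ?I"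
    by (rule indep_vars_subset[OF indep_vars_compose_count_summands]) auto
  moreover have "integrable M (?H i)" for i
    by (cases i) (auto intro: integrable_const_bound[where B=Bh] integrable_const_bound[where B=Bg] simp: h g)
  ultimately have "(\<integral>x. (\<Prod>i\<in>?I. ?H i x) \<partial>M) = (\<Prod>i\<in>?I. \<integral>x. ?H i x \<partial>M)"
    using \<open>finite J\<close> by (intro indep_vars_lebesgue_integral) auto
  then show ?thesis
    using \<open>finite J\<close> by (simp add: prod.reindex integral_summand card_image)
qed

lemma integral_indicator_count_greater:
  "(\<integral>x. (if j < Y x then 1 else 0 :: real) \<partial>M) = measure M {x\<in>space M. j < Y x}"
proof -
  have "(\<integral>x. (if j < Y x then 1 else 0 :: real) \<partial>M) = (\<integral>x. indicator {x\<in>space M. j < Y x} x \<partial>M)"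
    by (intro Bochner_Integration.integral_cong) (auto simp: indicator_def)
  then show ?thesis by simp
qed

lemma nn_integral_random_sum_eq_suminf:
  fixes f :: "nat \<Rightarrow> real" assumes f: "\<And>z. 0 \<le> f z"
  shows "(\<integral>\<^sup>+x. ennreal (\<Sum>j<Y x. f (Z j x)) \<partial>M) =
     (\<Sum>j. emeasure M {x\<in>space M. j < Y x}) * (\<integral>\<^sup>+z. ennreal (f z) \<partial>measure_pmf p)"
proof -
  have "ennreal (\<Sum>j<Y x. f (Z j x)) = (\<Sum>j. ennreal ((if j < Y x then 1 else 0) * f (Z j x)))" for x
  proof -
    have "(\<Sum>j. ennreal ((if j < Y x then 1 else 0) * f (Z j x))) = (\<Sum>j<Y x. ennreal (f (Z j x)))"
      by (subst suminf_finite[of "{..<Y x}"]) auto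
    then show ?thesis by (simp add: sum_ennreal f)
  qed
  then have "(\<integral>\<^sup>+x. ennreal (\<Sum>j<Y x. f (Z j x)) \<partial>M) =
      (\<Sum>j. \<integral>\<^sup>+x. ennreal ((if j < Y x then 1 else 0) * f (Z j x)) \<partial>M)"
    by (simp add: nn_integral_suminf)
  also have "\<dots> = (\<Sum>j. emeasure M {x\<in>space M. j < Y x} * (\<integral>\<^sup>+z. ennreal (f z) \<partial>measure_pmf p))"
  proof (rule suminf_cong)
    fix j
    have "(\<integral>\<^sup>+x. ennreal (if j < Y x then 1 else 0) \<partial>M) = (\<integral>\<^sup>+x. indicator {x\<in>space M. j < Y x} x \<partial>M)"
      by (intro nn_integral_cong) (auto simp: indicator_def)
    then have "(\<integral>\<^sup>+x. ennreal (if j < Y x then 1 else 0) \<partial>M) = emeasure M {x\<in>space M. j < Y x}"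
      by simp
    then show "(\<integral>\<^sup>+x. ennreal ((if j < Y x then 1 else 0) * f (Z j x)) \<partial>M) =
        emeasure M {x\<in>space M. j < Y x} * (\<integral>\<^sup>+z. ennreal (f z) \<partial>measure_pmf p)"
      using nn_integral_count_mult_summand[where h="\<lambda>y. if j < y then 1 else 0"] f by simp
  qed
  also have "\<dots> = (\<Sum>j. emeasure M {x\<in>space M. j < Y x}) * (\<integral>\<^sup>+z. ennreal (f z) \<partial>measure_pmf p)"
    by (rule ennreal_suminf_multc)
  finally show ?thesis .
qed

lemma nn_integral_count_eq_suminf:
  "(\<integral>\<^sup>+x. ennreal (real (Y x)) \<partial>M) = (\<Sum>j. emeasure M {x\<in>space M. j < Y x})"
  using nn_integral_random_sum_eq_suminf[of "\<lambda>_. 1"] by (simp add: measure_pmf.emeasure_space_1)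

lemma wald_identity:
  fixes f :: "nat \<Rightarrow> real" assumes "\<And>z. 0 \<le> f z"
  shows "(\<integral>\<^sup>+x. ennreal (\<Sum>j<Y x. f (Z j x)) \<partial>M) =
     (\<integral>\<^sup>+x. ennreal (real (Y x)) \<partial>M) * (\<integral>\<^sup>+z. ennreal (f z) \<partial>measure_pmf p)"
  using nn_integral_random_sum_eq_suminf[OF assms] nn_integral_count_eq_suminf by simp

lemma integral_truncated_summand_products:
  fixes g :: "nat \<Rightarrow> real"
  assumes bounded: "\<And>z. \<bar>g z\<bar> \<le> C" and centred: "measure_pmf.expectation p g = 0"
  shows "(\<integral>x. ((if i < Y x then 1 else 0) * g (Z i x)) * ((if j < Y x then 1 else 0) * g (Z j x)) \<partial>M) =
    (if i = j then measure M {x\<in>space M. j < Y x} * measure_pmf.expectation p (\<lambda>z. (g z)\<^sup>2) else 0)"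
proof (cases "i = j")
  case True
  have "\<bar>(g z)\<^sup>2\<bar> \<le> C * C" for z
    using mult_mono[OF bounded bounded, of z z] bounded[of 0] by (simp add: power2_eq_square abs_mult)
  then have "(\<integral>x. (if j < Y x then 1 else 0) * (\<Prod>l\<in>{j}. (g (Z l x))\<^sup>2) \<partial>M) =
      (\<integral>x. (if j < Y x then 1 else 0 :: real) \<partial>M) * measure_pmf.expectation p (\<lambda>z. (g z)\<^sup>2)"
    by (subst integral_count_mult_prod_summands[where Bh=1 and Bg="C * C"]) auto
  moreover have "(\<lambda>x. ((if i < Y x then 1 else 0) * g (Z i x)) * ((if j < Y x then 1 else 0) * g (Z j x))) =
      (\<lambda>x. (if j < Y x then 1 else 0) * (\<Prod>l\<in>{j}. (g (Z l x))\<^sup>2))"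
    using True by (auto simp: power2_eq_square)
  ultimately show ?thesis
    using True by (simp add: integral_indicator_count_greater)
next
  case False
  have "(\<integral>x. (if max i j < Y x then 1 else 0) * (\<Prod>l\<in>{i, j}. g (Z l x)) \<partial>M) = 0"
    using False centred bounded by (subst integral_count_mult_prod_summands[where Bh=1 and Bg=C]) auto
  moreover have "(\<lambda>x. ((if i < Y x then 1 else 0) * g (Z i x)) * ((if j < Y x then 1 else 0) * g (Z j x))) =
      (\<lambda>x. (if max i j < Y x then 1 else 0) * (\<Prod>l\<in>{i, j}. g (Z l x)))"
    using False by auto
  ultimately show ?thesis
    using False by simp
qed

text \<open>Second moment of a random sum of centred summands; it is truncated to the first \<open>B\<close>
  summands so that everything stays bounded.\<close>

lemma integral_truncated_random_sum_square:
  fixes g :: "nat \<Rightarrow> real"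
  assumes bounded: "\<And>z. \<bar>g z\<bar> \<le> C" and centred: "measure_pmf.expectation p g = 0"
  shows "(\<integral>x. (\<Sum>j<B. (if j < Y x then 1 else 0) * g (Z j x))\<^sup>2 \<partial>M) =
     (\<Sum>j<B. measure M {x\<in>space M. j < Y x}) * measure_pmf.expectation p (\<lambda>z. (g z)\<^sup>2)"
proof -
  define a where "a = (\<lambda>j x. (if j < Y x then 1 else 0) * g (Z j x))"
  have C: "0 \<le> C" using bounded[of 0] by simp
  have "\<bar>a i x * a j x\<bar> \<le> C * C" for i j x
    unfolding a_def abs_mult by (intro mult_mono) (auto simp: bounded C)
  then have int: "integrable M (\<lambda>x. a i x * a j x)" for i j
    by (intro integrable_const_bound[where B="C * C"]) (auto simp: a_def)
  have "(\<integral>x. (\<Sum>j<B. a j x)\<^sup>2 \<partial>M) = (\<Sum>i<B. \<Sum>j<B. \<integral>x. a i x * a j x \<partial>M)"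
    by (simp add: power2_eq_square sum_product Bochner_Integration.integral_sum int)
  also have "\<dots> = (\<Sum>j<B. measure M {x\<in>space M. j < Y x} * measure_pmf.expectation p (\<lambda>z. (g z)\<^sup>2))"
    unfolding a_def by (simp add: integral_truncated_summand_products[OF bounded centred])
  finally show ?thesis by (simp add: a_def sum_distrib_right)
qed

end

section \<open>Truncated laws\<close>

definition truncate_at :: "real \<Rightarrow> nat \<Rightarrow> real" where
  "truncate_at T k = (if real k < T then real k else 0)"

definition tail_prob :: "nat pmf \<Rightarrow> real \<Rightarrow> real" where
  "tail_prob p T = measure_pmf.prob p {k. T \<le> real k}"

definition truncated_mean :: "nat pmf \<Rightarrow> real \<Rightarrow> real" where
  "truncated_mean p T = measure_pmf.expectation p (truncate_at T)"

definition truncated_var :: "nat pmf \<Rightarrow> real \<Rightarrow> real" where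
  "truncated_var p T = measure_pmf.expectation p (\<lambda>k. (truncate_at T k - truncated_mean p T)\<^sup>2)"

lemma truncate_at_nonneg: "0 \<le> truncate_at T k"
  by (simp add: truncate_at_def)

lemma truncate_at_le: "0 < T \<Longrightarrow> truncate_at T k \<le> T"
  by (simp add: truncate_at_def)

lemma integrable_pmf_bounded:
  fixes f :: "nat \<Rightarrow> real" assumes "\<And>k. \<bar>f k\<bar> \<le> B"
  shows "integrable (measure_pmf p) f"
  by (rule measure_pmf.integrable_const_bound[where B=B]) (auto simp: assms)

lemma integrable_truncate_at: "0 < T \<Longrightarrow> integrable (measure_pmf p) (truncate_at T)"
  by (rule integrable_pmf_bounded[where B=T]) (simp add: truncate_at_def)

lemma pmean_nonneg: "0 \<le> pmean p"
  unfolding pmean_def by (rule integral_nonneg_AE) auto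

lemma tail_prob_nonneg: "0 \<le> tail_prob p T"
  by (simp add: tail_prob_def)

lemma truncated_var_nonneg: "0 \<le> truncated_var p T"
  unfolding truncated_var_def by (rule integral_nonneg_AE) auto

lemma truncated_mean_nonneg: "0 \<le> truncated_mean p T"
  unfolding truncated_mean_def by (rule integral_nonneg_AE) (auto simp: truncate_at_nonneg)

lemma truncated_mean_le: assumes "0 < T" shows "truncated_mean p T \<le> T"
proof -
  have "truncated_mean p T \<le> measure_pmf.expectation p (\<lambda>_. T)"
    unfolding truncated_mean_def
    by (rule integral_mono) (use assms in \<open>auto intro: integrable_truncate_at truncate_at_le\<close>)
  then show ?thesis by simp
qed

lemma truncated_mean_le_pmean:
  "integrable (measure_pmf p) real \<Longrightarrow> 0 < T \<Longrightarrow> truncated_mean p T \<le> pmean p"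
  unfolding truncated_mean_def pmean_def
  by (rule integral_mono[OF integrable_truncate_at]) (auto simp: truncate_at_def)

lemma abs_truncate_at_minus_truncated_mean_le:
  "0 < T \<Longrightarrow> \<bar>truncate_at T k - truncated_mean p T\<bar> \<le> 2 * T"
  using truncate_at_le[of T k] truncate_at_nonneg[of T k] truncated_mean_le[of T p]
    truncated_mean_nonneg[of p T] by linarith

context
  fixes p :: "nat pmf" and c :: real
  assumes mean: "integrable (measure_pmf p) real" and c: "1 \<le> c"
begin

lemma integrable_pgf_gap: "integrable (measure_pmf p) (pgf_gap (1/c))"
proof -
  have "integrable (measure_pmf p) (\<lambda>k. (1 - 1/c) ^ k - 1)"
    by (rule integrable_pmf_bounded[where B=1]) (use c power_le_one[of "1 - 1/c"] in simp)
  moreover have "integrable (measure_pmf p) (\<lambda>k. real k * (1/c))" using mean by simp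
  ultimately show ?thesis unfolding pgf_gap_def[abs_def] by (rule Bochner_Integration.integrable_add)
qed

lemma expectation_pgf_gap:
  "measure_pmf.expectation p (pgf_gap (1/c)) = pgf p (1 - 1/c) - 1 + pmean p / c"
proof -
  have power: "integrable (measure_pmf p) (\<lambda>k. (1 - 1/c) ^ k)"
    by (rule integrable_pmf_bounded[where B=1]) (use c in \<open>auto simp: power_le_one\<close>)
  have "measure_pmf.expectation p (pgf_gap (1/c)) =
      measure_pmf.expectation p (\<lambda>k. ((1 - 1/c) ^ k - 1) + real k * (1/c))"
    unfolding pgf_gap_def by simp
  also have "\<dots> = pgf p (1 - 1/c) - 1 + pmean p / c"
    using power mean by (simp add: pgf_def pmean_def)
  finally show ?thesis .
qed

lemma expectation_pgf_gap_nonneg: "0 \<le> measure_pmf.expectation p (pgf_gap (1/c))"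
  by (rule integral_nonneg_AE) (use c in \<open>auto intro!: pgf_gap_nonneg\<close>)

text \<open>The truncation level is \<open>R c\<close>; beyond it \<open>pgf_gap (1/c)\<close> is of linear size, below it of
  quadratic size, which controls tail, mean defect and variance of the truncation.\<close>

lemma tail_prob_le_pgf_gap:
  assumes R: "2 \<le> R"
  shows "tail_prob p (R * c) \<le> (2 / R) * measure_pmf.expectation p (pgf_gap (1/c))"
proof -
  have "tail_prob p (R * c) = measure_pmf.expectation p (indicator {k. R * c \<le> real k})"
    unfolding tail_prob_def by simp
  also have "\<dots> \<le> measure_pmf.expectation p (\<lambda>k. (2 / R) * pgf_gap (1/c) k)"
  proof (rule integral_mono)
    show "integrable (measure_pmf p) (indicat_real {k. R * c \<le> real k})"
      by (rule integrable_pmf_bounded[where B=1]) auto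
    show "integrable (measure_pmf p) (\<lambda>k. 2 / R * pgf_gap (1 / c) k)"
      using integrable_pgf_gap by simp
    show "indicat_real {k. R * c \<le> real k} k \<le> 2 / R * pgf_gap (1 / c) k" for k
      using one_le_pgf_gap_tail[OF c R, of k] pgf_gap_nonneg[of "1/c" k] c R
      by (auto simp: indicator_def)
  qed
  finally show ?thesis by simp
qed

lemma pmean_minus_truncated_mean_le:
  assumes R: "2 \<le> R"
  shows "pmean p - truncated_mean p (R * c) \<le> 2 * c * measure_pmf.expectation p (pgf_gap (1/c))"
proof -
  have T: "0 < R * c" using c R by simp
  have "pmean p - truncated_mean p (R * c) = measure_pmf.expectation p (\<lambda>k. real k - truncate_at (R * c) k)"
    unfolding pmean_def truncated_mean_def using integrable_truncate_at[OF T] mean by simp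
  also have "\<dots> \<le> measure_pmf.expectation p (\<lambda>k. 2 * c * pgf_gap (1/c) k)"
  proof (rule integral_mono)
    show "integrable (measure_pmf p) (\<lambda>k. real k - truncate_at (R * c) k)"
      using integrable_truncate_at[OF T] mean by simp
    show "integrable (measure_pmf p) (\<lambda>k. 2 * c * pgf_gap (1 / c) k)"
      using integrable_pgf_gap by simp
    show "real k - truncate_at (R * c) k \<le> 2 * c * pgf_gap (1 / c) k" for k
    proof (cases "R * c \<le> real k")
      case True
      moreover have "2 * c \<le> R * c" using R c by (intro mult_right_mono) auto
      ultimately show ?thesis using real_le_pgf_gap[OF c, of k] by (simp add: truncate_at_def)
    next
      case False
      then show ?thesis using pgf_gap_nonneg[of "1/c" k] c by (simp add: truncate_at_def)
    qed
  qed
  finally show ?thesis by simp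
qed

lemma truncated_var_le:
  assumes c2: "2 \<le> c" and R: "2 \<le> R"
  shows "truncated_var p (R * c) \<le> (2 * exp 4 + 2 * R) * c\<^sup>2 * measure_pmf.expectation p (pgf_gap (1/c))
     + truncated_mean p (R * c) * (1 - truncated_mean p (R * c))"
proof -
  let ?T = "R * c" and ?m = "truncated_mean p (R * c)" and ?K = "(2 * exp 4 + 2 * R) * c\<^sup>2"
  have T: "0 < ?T" using c R by simp
  have bounded: "\<bar>truncate_at ?T k\<bar> \<le> ?T" for k using truncate_at_le[OF T] truncate_at_nonneg by simp
  have falling: "integrable (measure_pmf p) (\<lambda>k. truncate_at ?T k * (truncate_at ?T k - 1))"
    by (rule integrable_pmf_bounded[where B="?T * (?T + 1)"])
       (use bounded T in \<open>auto simp: abs_mult intro!: mult_mono order.trans[OF abs_triangle_ineq4]\<close>)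
  have "truncated_var p ?T = measure_pmf.expectation p
      (\<lambda>k. truncate_at ?T k * (truncate_at ?T k - 1) + truncate_at ?T k * (1 - 2 * ?m) + ?m\<^sup>2)"
    unfolding truncated_var_def
    by (intro Bochner_Integration.integral_cong) (auto simp: power2_eq_square algebra_simps)
  also have "\<dots> = measure_pmf.expectation p (\<lambda>k. truncate_at ?T k * (truncate_at ?T k - 1))
      + ?m * (1 - 2 * ?m) + ?m\<^sup>2"
    using integrable_truncate_at[OF T] falling by (simp add: truncated_mean_def)
  also have "\<dots> = measure_pmf.expectation p (\<lambda>k. truncate_at ?T k * (truncate_at ?T k - 1)) + ?m * (1 - ?m)"
    by (simp add: algebra_simps power2_eq_square)
  also have "measure_pmf.expectation p (\<lambda>k. truncate_at ?T k * (truncate_at ?T k - 1))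
      \<le> measure_pmf.expectation p (\<lambda>k. ?K * pgf_gap (1/c) k)"
  proof (rule integral_mono[OF falling])
    show "integrable (measure_pmf p) (\<lambda>k. ?K * pgf_gap (1 / c) k)" using integrable_pgf_gap by simp
    show "truncate_at ?T k * (truncate_at ?T k - 1) \<le> ?K * pgf_gap (1 / c) k" for k
      using falling_square_le_pgf_gap[OF c2 R, of k] pgf_gap_nonneg[of "1/c" k] c R
      by (auto simp: truncate_at_def)
  qed
  finally show ?thesis by simp
qed

end

section \<open>Branching processes with immigration\<close>

lemma nn_integral_pmf_real:
  "integrable (measure_pmf p) real \<Longrightarrow> (\<integral>\<^sup>+z. ennreal (real z) \<partial>measure_pmf p) = ennreal (pmean p)"
  unfolding pmean_def by (rule nn_integral_eq_integral) auto

lemma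
  fixes f :: "'a \<Rightarrow> real"
  assumes [measurable]: "f \<in> borel_measurable M" and nonneg: "\<And>x. 0 \<le> f x"
    and le: "(\<integral>\<^sup>+x. ennreal (f x) \<partial>M) \<le> ennreal C" and C: "0 \<le> C"
  shows integrable_if_nn_integral_le: "integrable M f"
    and integral_le_if_nn_integral_le: "integral\<^sup>L M f \<le> C"
proof -
  have "(\<integral>\<^sup>+x. ennreal (norm (f x)) \<partial>M) < \<infinity>"
    using le nonneg by (simp add: le_less_trans)
  then show int: "integrable M f" by (intro integrableI_bounded) auto
  have "ennreal (integral\<^sup>L M f) \<le> ennreal C"
    using le nn_integral_eq_integral[OF int] nonneg by simp
  then show "integral\<^sup>L M f \<le> C" using C by (simp add: ennreal_le_iff)
qed

locale branching_immigration = prob_space M for M :: "'a measure" +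
  fixes X :: "nat \<Rightarrow> nat \<Rightarrow> 'a \<Rightarrow> nat" and E :: "nat \<Rightarrow> 'a \<Rightarrow> nat" and p q :: "nat pmf"
  assumes indep: "indep_vars (\<lambda>_. count_space UNIV)
        (\<lambda>i. case i of Inl (k, j) \<Rightarrow> X k j | Inr k \<Rightarrow> E k)
        ({(k, j). 1 \<le> k \<and> 1 \<le> j} <+> {k. 1 \<le> k})"
    and distr_offspring: "\<And>k j. 1 \<le> k \<Longrightarrow> 1 \<le> j \<Longrightarrow> distr M (count_space UNIV) (X k j) = measure_pmf p"
    and distr_immigration: "\<And>k. 1 \<le> k \<Longrightarrow> distr M (count_space UNIV) (E k) = measure_pmf q"
    and offspring_mean: "integrable (measure_pmf p) real"
    and immigration_mean: "integrable (measure_pmf q) real"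
begin

lemma offspring_measurable: "1 \<le> k \<Longrightarrow> 1 \<le> j \<Longrightarrow> X k j \<in> M \<rightarrow>\<^sub>M count_space UNIV"
  using indep unfolding indep_vars_def by (drule_tac conjunct1, drule_tac x="Inl (k, j)" in bspec) auto

lemma immigration_measurable: "1 \<le> k \<Longrightarrow> E k \<in> M \<rightarrow>\<^sub>M count_space UNIV"
  using indep unfolding indep_vars_def by (drule_tac conjunct1, drule_tac x="Inr k" in bspec) auto

lemma generation_measurable[measurable]: "bpi X E k \<in> M \<rightarrow>\<^sub>M count_space UNIV"
  by (rule bpi_measurable) (auto intro: offspring_measurable immigration_measurable)

lemma random_sum_generation: "1 \<le> k \<Longrightarrow> random_sum M (bpi X E (k - 1)) (\<lambda>j. X k (Suc j)) p"
  unfolding random_sum_def random_sum_axioms_def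
  using indep_vars_bpi_offspring[OF prob_space_axioms indep] distr_offspring prob_space_axioms by auto

lemma nn_integral_immigration:
  assumes "1 \<le> k" shows "(\<integral>\<^sup>+x. f (E k x) \<partial>M) = (\<integral>\<^sup>+z. f z \<partial>measure_pmf q)"
  using nn_integral_distr[OF immigration_measurable[OF assms], of f] by (simp add: distr_immigration[OF assms])

lemma integral_immigration:
  assumes "1 \<le> k" shows "(\<integral>x. f (E k x) \<partial>M) = measure_pmf.expectation q (f :: nat \<Rightarrow> real)"
  using integral_distr[OF immigration_measurable[OF assms], of f] by (simp add: distr_immigration[OF assms])

lemma nn_integral_generation:
  assumes k: "1 \<le> k"
  shows "(\<integral>\<^sup>+x. ennreal (real (bpi X E k x)) \<partial>M) =
    (\<integral>\<^sup>+x. ennreal (real (bpi X E (k - 1) x)) \<partial>M) * ennreal (pmean p) + ennreal (pmean q)"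
proof -
  interpret random_sum M "bpi X E (k - 1)" "\<lambda>j. X k (Suc j)" p by (rule random_sum_generation[OF k])
  have [measurable]: "E k \<in> M \<rightarrow>\<^sub>M count_space UNIV" by (rule immigration_measurable[OF k])
  have "(\<integral>\<^sup>+x. ennreal (real (bpi X E k x)) \<partial>M) =
     (\<integral>\<^sup>+x. ennreal (\<Sum>j<bpi X E (k - 1) x. real (X k (Suc j) x)) + ennreal (real (E k x)) \<partial>M)"
    by (intro nn_integral_cong)
       (simp add: bpi_eq_sum_lessThan[OF k] ennreal_plus[symmetric] sum_nonneg del: ennreal_plus)
  also have "\<dots> = (\<integral>\<^sup>+x. ennreal (\<Sum>j<bpi X E (k - 1) x. real (X k (Suc j) x)) \<partial>M) +
      (\<integral>\<^sup>+x. ennreal (real (E k x)) \<partial>M)"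
    by (rule nn_integral_add) measurable
  also have "\<dots> = (\<integral>\<^sup>+x. ennreal (real (bpi X E (k - 1) x)) \<partial>M) * ennreal (pmean p) + ennreal (pmean q)"
    using wald_identity[of real] nn_integral_immigration[OF k, of "\<lambda>z. ennreal (real z)"]
    by (simp add: nn_integral_pmf_real offspring_mean immigration_mean)
  finally show ?thesis .
qed

lemma nn_integral_generation_le:
  "(\<integral>\<^sup>+x. ennreal (real (bpi X E k x)) \<partial>M) \<le> ennreal (real k * pmean q * max 1 (pmean p) ^ k)"
proof (induction k)
  case 0 then show ?case by simp
next
  case (Suc k)
  let ?M = "max 1 (pmean p)" and ?m = "pmean p" and ?w = "pmean q"
  have nonneg: "0 \<le> ?m" "0 \<le> ?w" by (auto intro: pmean_nonneg)
  have "(\<integral>\<^sup>+x. ennreal (real (bpi X E (Suc k) x)) \<partial>M) =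
      (\<integral>\<^sup>+x. ennreal (real (bpi X E k x)) \<partial>M) * ennreal ?m + ennreal ?w"
    using nn_integral_generation[of "Suc k"] by simp
  also have "\<dots> \<le> ennreal (real k * ?w * ?M ^ k) * ennreal ?m + ennreal ?w"
    by (intro add_mono mult_right_mono Suc.IH) auto
  also have "\<dots> = ennreal (real k * ?w * ?M ^ k * ?m + ?w)"
    using nonneg by (simp add: ennreal_mult[symmetric] ennreal_plus[symmetric] del: ennreal_plus)
  also have "\<dots> \<le> ennreal (real (Suc k) * ?w * ?M ^ Suc k)"
  proof (rule ennreal_leI)
    have "real k * ?w * ?M ^ k * ?m \<le> real k * ?w * ?M ^ k * ?M"
      using nonneg by (intro mult_left_mono) auto
    moreover have "?w \<le> ?w * ?M ^ Suc k"
      using nonneg mult_left_mono[OF one_le_power[of ?M "Suc k"], of ?w] by simp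
    ultimately show "real k * ?w * ?M ^ k * ?m + ?w \<le> real (Suc k) * ?w * ?M ^ Suc k"
      by (simp add: algebra_simps)
  qed
  finally show ?case .
qed

lemma nn_integral_generation_le_linear:
  assumes A: "real n * (pmean p - 1) \<le> A" "0 \<le> A" and k: "k < n"
  shows "(\<integral>\<^sup>+x. ennreal (real (bpi X E k x)) \<partial>M) \<le> ennreal (real n * pmean q * exp A)"
proof -
  let ?M = "max 1 (pmean p)"
  have n: "0 < real n" using k by simp
  then have "?M \<le> 1 + A / real n" using A by (simp add: field_simps)
  then have "?M ^ k \<le> (1 + A / real n) ^ n"
    using k by (intro order.trans[OF power_increasing power_mono]) auto
  also have "\<dots> \<le> exp A" using A n by (intro exp_ge_one_plus_x_over_n_power_n) auto
  finally have "real k * pmean q * ?M ^ k \<le> real n * pmean q * exp A"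
    using k pmean_nonneg[of q] by (intro mult_mono) auto
  then show ?thesis by (rule order.trans[OF nn_integral_generation_le ennreal_leI])
qed

end

section \<open>Truncated generation steps\<close>

context branching_immigration
begin

definition large_offspring_count :: "nat \<Rightarrow> real \<Rightarrow> 'a \<Rightarrow> real" where
  "large_offspring_count k T x = (\<Sum>j<bpi X E (k - 1) x. indicator {z. T \<le> real z} (X k (Suc j) x))"

definition centred_offspring_sum :: "nat \<Rightarrow> real \<Rightarrow> nat \<Rightarrow> 'a \<Rightarrow> real" where
  "centred_offspring_sum k T B x = (\<Sum>j<B. (if j < bpi X E (k - 1) x then 1 else 0) *
      (truncate_at T (X k (Suc j) x) - truncated_mean p T))"

definition centred_immigration :: "nat \<Rightarrow> real \<Rightarrow> 'a \<Rightarrow> real" where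
  "centred_immigration k T x = truncate_at T (E k x) - truncated_mean q T"

context
  fixes k :: nat and T :: real
  assumes k: "1 \<le> k"
begin

interpretation random_sum M "bpi X E (k - 1)" "\<lambda>j. X k (Suc j)" p
  by (rule random_sum_generation[OF k])

declare immigration_measurable[OF k, measurable]

lemma large_offspring_count_measurable[measurable]: "large_offspring_count k T \<in> borel_measurable M"
proof -
  have "(\<lambda>n x. \<Sum>j<n. indicat_real {z. T \<le> real z} (X k (Suc j) x)) n \<in> borel_measurable M" for n
    by measurable
  then have "(\<lambda>x. (\<lambda>n x. \<Sum>j<n. indicat_real {z. T \<le> real z} (X k (Suc j) x)) (bpi X E (k - 1) x) x)
      \<in> borel_measurable M"
    by (rule measurable_compose_countable) measurable
  then show ?thesis by (simp add: large_offspring_count_def[abs_def])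
qed

lemma centred_offspring_sum_measurable[measurable]: "centred_offspring_sum k T B \<in> borel_measurable M"
  unfolding centred_offspring_sum_def by measurable

lemma centred_immigration_measurable[measurable]: "centred_immigration k T \<in> borel_measurable M"
  unfolding centred_immigration_def by measurable

lemma one_le_large_offspring_count:
  assumes "j < bpi X E (k - 1) x" "T \<le> real (X k (Suc j) x)"
  shows "1 \<le> large_offspring_count k T x"
proof -
  have "(1::real) = indicator {z. T \<le> real z} (X k (Suc j) x)" using assms by simp
  also have "\<dots> \<le> large_offspring_count k T x"
    unfolding large_offspring_count_def by (rule member_le_sum) (use assms in auto)
  finally show ?thesis .
qed

lemma prob_large_offspring_le:
  assumes int: "integrable M (\<lambda>x. real (bpi X E (k - 1) x))"
  shows "prob {x\<in>space M. 1 \<le> large_offspring_count k T x}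
    \<le> expectation (\<lambda>x. real (bpi X E (k - 1) x)) * tail_prob p T"
proof -
  let ?EY = "expectation (\<lambda>x. real (bpi X E (k - 1) x))"
  have EY: "0 \<le> ?EY" by (rule integral_nonneg_AE) auto
  have nonneg: "0 \<le> large_offspring_count k T x" for x
    unfolding large_offspring_count_def by (auto intro: sum_nonneg)
  have "(\<integral>\<^sup>+x. ennreal (large_offspring_count k T x) \<partial>M) =
      (\<integral>\<^sup>+x. ennreal (real (bpi X E (k - 1) x)) \<partial>M) * (\<integral>\<^sup>+z. indicator {z. T \<le> real z} z \<partial>measure_pmf p)"
    unfolding large_offspring_count_def using wald_identity[of "indicator {z. T \<le> real z}"]
    by (simp add: ennreal_indicator)
  also have "\<dots> = ennreal (?EY * tail_prob p T)"
    using nn_integral_eq_integral[OF int]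
    by (simp add: tail_prob_def measure_pmf.emeasure_eq_measure ennreal_mult EY)
  finally have le: "(\<integral>\<^sup>+x. ennreal (large_offspring_count k T x) \<partial>M) \<le> ennreal (?EY * tail_prob p T)"
    by simp
  have "prob {x\<in>space M. 1 \<le> large_offspring_count k T x} \<le> expectation (large_offspring_count k T) / 1"
    using nonneg integrable_if_nn_integral_le[OF _ _ le]
    by (intro integral_Markov_inequality_measure[where A="space M"]) (auto simp: EY tail_prob_nonneg)
  also have "\<dots> \<le> ?EY * tail_prob p T"
    using nonneg integral_le_if_nn_integral_le[OF _ _ le] by (simp add: EY tail_prob_nonneg)
  finally show ?thesis .
qed

lemma prob_large_immigration: "prob {x\<in>space M. T \<le> real (E k x)} = tail_prob q T"
proof -
  have "tail_prob q T = measure (distr M (count_space UNIV) (E k)) {z. T \<le> real z}"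
    by (simp add: tail_prob_def distr_immigration[OF k])
  also have "\<dots> = prob (E k -` {z. T \<le> real z} \<inter> space M)"
    by (rule measure_distr) auto
  finally show ?thesis by (simp add: Int_def conj_commute)
qed

context
  assumes T: "0 < T"
begin

lemma abs_centred_offspring_sum_le: "\<bar>centred_offspring_sum k T B x\<bar> \<le> real B * (2 * T)"
proof -
  have "\<bar>centred_offspring_sum k T B x\<bar>
      \<le> (\<Sum>j<B. \<bar>(if j < bpi X E (k - 1) x then 1 else 0) * (truncate_at T (X k (Suc j) x) - truncated_mean p T)\<bar>)"
    unfolding centred_offspring_sum_def by (rule sum_abs)
  also have "\<dots> \<le> (\<Sum>j<B. 2 * T)"
    using abs_truncate_at_minus_truncated_mean_le[OF T] T by (intro sum_mono) auto
  finally show ?thesis by simp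
qed

lemma integrable_centred_offspring_sum_square: "integrable M (\<lambda>x. (centred_offspring_sum k T B x)\<^sup>2)"
proof (rule integrable_const_bound[where B="(real B * (2 * T))\<^sup>2"])
  show "AE x in M. norm ((centred_offspring_sum k T B x)\<^sup>2) \<le> (real B * (2 * T))\<^sup>2"
    using abs_centred_offspring_sum_le T by (auto simp: power2_le_iff_abs_le)
qed measurable

lemma integral_centred_offspring_sum_square_le:
  assumes int: "integrable M (\<lambda>x. real (bpi X E (k - 1) x))"
  shows "expectation (\<lambda>x. (centred_offspring_sum k T B x)\<^sup>2)
    \<le> expectation (\<lambda>x. real (bpi X E (k - 1) x)) * truncated_var p T"
proof -
  let ?EY = "expectation (\<lambda>x. real (bpi X E (k - 1) x))"
  have "measure_pmf.expectation p (\<lambda>z. truncate_at T z - truncated_mean p T) = 0"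
    using integrable_truncate_at[OF T] by (simp add: truncated_mean_def)
  then have eq: "expectation (\<lambda>x. (centred_offspring_sum k T B x)\<^sup>2) =
      (\<Sum>j<B. prob {x\<in>space M. j < bpi X E (k - 1) x}) * truncated_var p T"
    unfolding centred_offspring_sum_def truncated_var_def
    by (intro integral_truncated_random_sum_square[where C="2 * T"]
        abs_truncate_at_minus_truncated_mean_le[OF T])
  have "(\<Sum>j<B. emeasure M {x\<in>space M. j < bpi X E (k - 1) x})
      \<le> (\<Sum>j. emeasure M {x\<in>space M. j < bpi X E (k - 1) x})"
    by (rule sum_le_suminf[OF summableI]) auto
  also have "\<dots> = ennreal ?EY"
    using nn_integral_count_eq_suminf nn_integral_eq_integral[OF int] by simp
  finally have "(\<Sum>j<B. prob {x\<in>space M. j < bpi X E (k - 1) x}) \<le> ?EY"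
    by (simp add: emeasure_eq_measure sum_ennreal ennreal_le_iff[symmetric] integral_nonneg_AE
        del: ennreal_le_iff)
  then show ?thesis unfolding eq by (rule mult_right_mono[OF _ truncated_var_nonneg])
qed

lemma integrable_centred_immigration_square: "integrable M (\<lambda>x. (centred_immigration k T x)\<^sup>2)"
proof (rule integrable_const_bound[where B="(2 * T)\<^sup>2"])
  show "AE x in M. norm ((centred_immigration k T x)\<^sup>2) \<le> (2 * T)\<^sup>2"
  proof (intro AE_I2)
    fix x
    have "\<bar>centred_immigration k T x\<bar> \<le> 2 * T"
      unfolding centred_immigration_def by (rule abs_truncate_at_minus_truncated_mean_le[OF T])
    then show "norm ((centred_immigration k T x)\<^sup>2) \<le> (2 * T)\<^sup>2"
      using power2_le_iff_abs_le[of "2 * T" "centred_immigration k T x"] T by simp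
  qed
qed measurable

lemma integral_centred_immigration_square:
  "expectation (\<lambda>x. (centred_immigration k T x)\<^sup>2) = truncated_var q T"
  unfolding centred_immigration_def truncated_var_def by (rule integral_immigration[OF k])

end

lemma generation_increment_eq:
  assumes small: "bpi X E (k - 1) x \<le> B" "\<forall>j<bpi X E (k - 1) x. real (X k (Suc j) x) < T"
    "real (E k x) < T"
  shows "real (bpi X E k x) - m * real (bpi X E (k - 1) x) - w =
    centred_offspring_sum k T B x - (m - truncated_mean p T) * real (bpi X E (k - 1) x)
      + centred_immigration k T x - (w - truncated_mean q T)"
proof -
  let ?Y = "bpi X E (k - 1) x"
  have "centred_offspring_sum k T B x =
      (\<Sum>j<B. if j < ?Y then truncate_at T (X k (Suc j) x) - truncated_mean p T else 0)"
    unfolding centred_offspring_sum_def by (intro sum.cong) auto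
  also have "\<dots> = (\<Sum>j\<in>{..<B} \<inter> {j. j < ?Y}. truncate_at T (X k (Suc j) x) - truncated_mean p T)"
    by (simp add: sum.inter_restrict)
  also have "{..<B} \<inter> {j. j < ?Y} = {..<?Y}" using small by auto
  also have "(\<Sum>j<?Y. truncate_at T (X k (Suc j) x) - truncated_mean p T) = (\<Sum>j<?Y. real (X k (Suc j) x)) - real ?Y * truncated_mean p T"
    using small by (simp add: sum_subtractf truncate_at_def)
  finally show ?thesis
    using small by (simp add: bpi_eq_sum_lessThan[OF k] centred_immigration_def truncate_at_def algebra_simps)
qed

end

end

section \<open>The deviation estimate\<close>

lemma square_add4_le: "(a + b + c + d)\<^sup>2 \<le> 4 * (a\<^sup>2 + b\<^sup>2 + c\<^sup>2 + (d::real)\<^sup>2)"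
proof -
  have "4 * (a\<^sup>2 + b\<^sup>2 + c\<^sup>2 + d\<^sup>2) - (a + b + c + d)\<^sup>2
     = (a-b)\<^sup>2 + (a-c)\<^sup>2 + (a-d)\<^sup>2 + (b-c)\<^sup>2 + (b-d)\<^sup>2 + (c-d)\<^sup>2"
    by (simp add: power2_eq_square algebra_simps)
  moreover have "0 \<le> (a-b)\<^sup>2 + (a-c)\<^sup>2 + (a-d)\<^sup>2 + (b-c)\<^sup>2 + (b-d)\<^sup>2 + (c-d)\<^sup>2" by simp
  ultimately show ?thesis by linarith
qed

lemma sum_squares_le_square_sum:
  fixes f :: "'a \<Rightarrow> real" assumes "\<And>k. k \<in> A \<Longrightarrow> 0 \<le> f k"
  shows "(\<Sum>k\<in>A. (f k)\<^sup>2) \<le> (\<Sum>k\<in>A. f k)\<^sup>2"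
proof (cases "finite A")
  case True
  have "(\<Sum>k\<in>A. (f k)\<^sup>2) \<le> (\<Sum>k\<in>A. f k * (\<Sum>k\<in>A. f k))"
  proof (rule sum_mono)
    fix k assume k: "k \<in> A"
    have "f k \<le> (\<Sum>k\<in>A. f k)" by (rule member_le_sum) (use assms k True in auto)
    then show "(f k)\<^sup>2 \<le> f k * (\<Sum>k\<in>A. f k)"
      using assms[OF k] by (simp add: power2_eq_square mult_left_mono)
  qed
  also have "\<dots> = (\<Sum>k\<in>A. f k)\<^sup>2" by (simp add: power2_eq_square sum_distrib_right)
  finally show ?thesis .
qed simp

context branching_immigration
begin

definition irregular_step :: "nat \<Rightarrow> real \<Rightarrow> nat \<Rightarrow> 'a set" where
  "irregular_step k T B = {x\<in>space M. real B \<le> real (bpi X E (k - 1) x)}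
      \<union> {x\<in>space M. 1 \<le> large_offspring_count k T x} \<union> {x\<in>space M. T \<le> real (E k x)}"

lemma irregular_step_sets:
  assumes k: "1 \<le> k" shows "irregular_step k T B \<in> sets M"
proof -
  note [measurable] = large_offspring_count_measurable[OF k] immigration_measurable[OF k]
  show ?thesis unfolding irregular_step_def by measurable
qed

lemma regular_step:
  assumes "x \<in> space M" "x \<notin> irregular_step k T B"
  shows "bpi X E (k - 1) x \<le> B" "\<forall>j<bpi X E (k - 1) x. real (X k (Suc j) x) < T" "real (E k x) < T"
  using assms one_le_large_offspring_count[of k _ x T] by (force simp: irregular_step_def not_le)+

lemma sum_increment_squares_le:
  assumes x: "x \<in> space M" and regular: "\<And>k. k \<in> {1..N} \<Longrightarrow> x \<notin> irregular_step k T B"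
  shows "(\<Sum>k\<in>{1..N}. (real (bpi X E k x) - m * real (bpi X E (k - 1) x) - w)\<^sup>2)
    \<le> 4 * ((\<Sum>k\<in>{1..N}. (centred_offspring_sum k T B x)\<^sup>2)
      + ((m - truncated_mean p T) * (\<Sum>k\<in>{1..N}. real (bpi X E (k - 1) x)))\<^sup>2
      + (\<Sum>k\<in>{1..N}. (centred_immigration k T x)\<^sup>2)
      + real N * (w - truncated_mean q T)\<^sup>2)"
proof -
  let ?dm = "m - truncated_mean p T" and ?dw = "w - truncated_mean q T"
  let ?Y = "\<lambda>k. real (bpi X E (k - 1) x)"
  have "(\<Sum>k\<in>{1..N}. (real (bpi X E k x) - m * ?Y k - w)\<^sup>2) \<le>
      (\<Sum>k\<in>{1..N}. 4 * ((centred_offspring_sum k T B x)\<^sup>2 + ?dm\<^sup>2 * (?Y k)\<^sup>2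
        + (centred_immigration k T x)\<^sup>2 + ?dw\<^sup>2))"
  proof (rule sum_mono)
    fix k assume k: "k \<in> {1..N}"
    have "(real (bpi X E k x) - m * ?Y k - w)\<^sup>2 = (centred_offspring_sum k T B x + - (?dm * ?Y k)
        + centred_immigration k T x + - ?dw)\<^sup>2"
      using generation_increment_eq[of k x B T m w] k regular_step[OF x regular[OF k]] by (simp add: algebra_simps)
    also have "\<dots> \<le> 4 * ((centred_offspring_sum k T B x)\<^sup>2 + (- (?dm * ?Y k))\<^sup>2
        + (centred_immigration k T x)\<^sup>2 + (- ?dw)\<^sup>2)"
      by (rule square_add4_le)
    finally show "(real (bpi X E k x) - m * ?Y k - w)\<^sup>2 \<le> 4 * ((centred_offspring_sum k T B x)\<^sup>2
        + ?dm\<^sup>2 * (?Y k)\<^sup>2 + (centred_immigration k T x)\<^sup>2 + ?dw\<^sup>2)"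
      by (simp add: power_mult_distrib power2_commute[of "truncated_mean q T"])
  qed
  also have "\<dots> = 4 * ((\<Sum>k\<in>{1..N}. (centred_offspring_sum k T B x)\<^sup>2)
      + ?dm\<^sup>2 * (\<Sum>k\<in>{1..N}. (?Y k)\<^sup>2) + (\<Sum>k\<in>{1..N}. (centred_immigration k T x)\<^sup>2) + real N * ?dw\<^sup>2)"
    by (simp add: sum.distrib sum_distrib_left)
  also have "?dm\<^sup>2 * (\<Sum>k\<in>{1..N}. (?Y k)\<^sup>2) \<le> (?dm * (\<Sum>k\<in>{1..N}. ?Y k))\<^sup>2"
    unfolding power_mult_distrib by (intro mult_left_mono sum_squares_le_square_sum) auto
  finally show ?thesis by simp
qed

lemma sum_increment_squares_less:
  assumes x: "x \<in> space M" and regular: "\<And>k. k \<in> {1..N} \<Longrightarrow> x \<notin> irregular_step k T B"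
    and dm: "0 \<le> m - truncated_mean p T"
    and small: "(\<Sum>k\<in>{1..N}. (centred_offspring_sum k T B x)\<^sup>2) < Q"
      "(m - truncated_mean p T) * (\<Sum>k\<in>{1..N}. real (bpi X E (k - 1) x)) < sqrt Q"
      "(\<Sum>k\<in>{1..N}. (centred_immigration k T x)\<^sup>2) < Q"
      "real N * (w - truncated_mean q T)\<^sup>2 < Q"
  shows "(\<Sum>k\<in>{1..N}. (real (bpi X E k x) - m * real (bpi X E (k - 1) x) - w)\<^sup>2) < 16 * Q"
proof -
  let ?dmY = "(m - truncated_mean p T) * (\<Sum>k\<in>{1..N}. real (bpi X E (k - 1) x))"
  have "0 \<le> ?dmY" using dm by (auto intro!: mult_nonneg_nonneg sum_nonneg)
  then have "?dmY\<^sup>2 < (sqrt Q)\<^sup>2" using small(2) by (intro power_strict_mono) auto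
  moreover have "0 \<le> (\<Sum>k\<in>{1..N}. (centred_offspring_sum k T B x)\<^sup>2)" by (auto intro: sum_nonneg)
  then have "0 \<le> Q" using small(1) by linarith
  ultimately have "?dmY\<^sup>2 < Q" by simp
  then show ?thesis
    using sum_increment_squares_le[OF x regular, of N m w] small by simp
qed

lemma
  assumes "(\<integral>\<^sup>+x. ennreal (real (bpi X E k x)) \<partial>M) \<le> ennreal C" and "0 \<le> C"
  shows integrable_generation: "integrable M (\<lambda>x. real (bpi X E k x))"
    and expectation_generation_le: "expectation (\<lambda>x. real (bpi X E k x)) \<le> C"
  using integrable_if_nn_integral_le[OF _ _ assms] integral_le_if_nn_integral_le[OF _ _ assms] by auto

lemma prob_irregular_step_le:
  assumes k: "1 \<le> k" and B: "0 < B" and C: "0 \<le> C"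
    and mean_generation: "(\<integral>\<^sup>+x. ennreal (real (bpi X E (k - 1) x)) \<partial>M) \<le> ennreal C"
  shows "prob (irregular_step k T B) \<le> C / real B + C * tail_prob p T + tail_prob q T"
proof -
  let ?EY = "expectation (\<lambda>x. real (bpi X E (k - 1) x))"
  note int = integrable_generation[OF mean_generation C]
  note [measurable] = large_offspring_count_measurable[OF k] immigration_measurable[OF k]
  have "prob (irregular_step k T B)
    \<le> prob {x\<in>space M. real B \<le> real (bpi X E (k - 1) x)}
      + prob {x\<in>space M. 1 \<le> large_offspring_count k T x} + prob {x\<in>space M. T \<le> real (E k x)}"
    unfolding irregular_step_def
    by (intro order.trans[OF measure_Un_le] add_mono measure_Un_le order_refl) measurable
  also have "\<dots> \<le> ?EY / real B + ?EY * tail_prob p T + tail_prob q T"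
    using integral_Markov_inequality_measure[OF int sets.top, of B] B
      prob_large_offspring_le[OF k int, of T] prob_large_immigration[OF k, of T] by auto
  also have "\<dots> \<le> C / real B + C * tail_prob p T + tail_prob q T"
    using expectation_generation_le[OF mean_generation C] B
    by (intro add_mono divide_right_mono mult_right_mono tail_prob_nonneg) auto
  finally show ?thesis .
qed

context
  fixes N :: nat and C :: real
  assumes C: "0 \<le> C"
    and mean_generation: "\<And>k. k < N \<Longrightarrow> (\<integral>\<^sup>+x. ennreal (real (bpi X E k x)) \<partial>M) \<le> ennreal C"
begin

lemma prob_irregular_steps_le:
  assumes B: "0 < B"
  shows "prob (\<Union>k\<in>{1..N}. irregular_step k T B) \<le> real N * (C / real B + C * tail_prob p T + tail_prob q T)"
proof -
  have "prob (\<Union>k\<in>{1..N}. irregular_step k T B) \<le> (\<Sum>k\<in>{1..N}. prob (irregular_step k T B))"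
    by (rule finite_measure_subadditive_finite) (auto intro: irregular_step_sets)
  also have "\<dots> \<le> (\<Sum>k\<in>{1..N}. C / real B + C * tail_prob p T + tail_prob q T)"
    using B C mean_generation by (intro sum_mono prob_irregular_step_le) auto
  finally show ?thesis by simp
qed

lemma prob_sum_centred_offspring_squares_ge:
  assumes T: "0 < T" and Q: "0 < Q"
  shows "prob {x\<in>space M. Q \<le> (\<Sum>k\<in>{1..N}. (centred_offspring_sum k T B x)\<^sup>2)}
    \<le> real N * C * truncated_var p T / Q"
proof -
  let ?S = "\<lambda>x. \<Sum>k\<in>{1..N}. (centred_offspring_sum k T B x)\<^sup>2"
  have "prob {x\<in>space M. Q \<le> ?S x} \<le> expectation ?S / Q"
    using Q by (intro integral_Markov_inequality_measure[where A="space M"] Bochner_Integration.integrable_sum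
        integrable_centred_offspring_sum_square T) (auto intro!: sum_nonneg)
  also have "expectation ?S = (\<Sum>k\<in>{1..N}. expectation (\<lambda>x. (centred_offspring_sum k T B x)\<^sup>2))"
    using T by (intro Bochner_Integration.integral_sum integrable_centred_offspring_sum_square) auto
  also have "\<dots> \<le> (\<Sum>k\<in>{1..N}. C * truncated_var p T)"
    using T C mean_generation
    by (intro sum_mono order.trans[OF integral_centred_offspring_sum_square_le] mult_right_mono
        integrable_generation expectation_generation_le truncated_var_nonneg) auto
  finally show ?thesis using Q by (simp add: divide_right_mono)
qed

lemma prob_sum_generations_ge:
  assumes a: "0 < a" and d: "0 \<le> d"
  shows "prob {x\<in>space M. a \<le> d * (\<Sum>k\<in>{1..N}. real (bpi X E (k - 1) x))} \<le> d * (real N * C) / a"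
proof -
  let ?S = "\<lambda>x. \<Sum>k\<in>{1..N}. real (bpi X E (k - 1) x)"
  have int: "integrable M (\<lambda>x. real (bpi X E (k - 1) x))" if "k \<in> {1..N}" for k
    using that C mean_generation by (intro integrable_generation) auto
  have "prob {x\<in>space M. a \<le> d * ?S x} \<le> expectation (\<lambda>x. d * ?S x) / a"
    using a d int
    by (intro integral_Markov_inequality_measure[where A="space M"]) (auto intro!: mult_nonneg_nonneg sum_nonneg)
  also have "expectation (\<lambda>x. d * ?S x) = d * (\<Sum>k\<in>{1..N}. expectation (\<lambda>x. real (bpi X E (k - 1) x)))"
    using int by (simp add: Bochner_Integration.integral_sum)
  also have "\<dots> \<le> d * (real N * C)"
  proof (rule mult_left_mono[OF _ d])
    have "(\<Sum>k\<in>{1..N}. expectation (\<lambda>x. real (bpi X E (k - 1) x))) \<le> (\<Sum>k\<in>{1..N}. C)"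
      using C mean_generation by (intro sum_mono expectation_generation_le) auto
    then show "(\<Sum>k\<in>{1..N}. expectation (\<lambda>x. real (bpi X E (k - 1) x))) \<le> real N * C" by simp
  qed
  finally show ?thesis using a by (simp add: divide_right_mono)
qed

end

lemma prob_sum_centred_immigration_squares_ge:
  assumes T: "0 < T" and Q: "0 < Q"
  shows "prob {x\<in>space M. Q \<le> (\<Sum>k\<in>{1..N}. (centred_immigration k T x)\<^sup>2)} \<le> real N * truncated_var q T / Q"
proof -
  let ?S = "\<lambda>x. \<Sum>k\<in>{1..N}. (centred_immigration k T x)\<^sup>2"
  have "prob {x\<in>space M. Q \<le> ?S x} \<le> expectation ?S / Q"
    using Q by (intro integral_Markov_inequality_measure[where A="space M"] Bochner_Integration.integrable_sum
        integrable_centred_immigration_square T) (auto intro!: sum_nonneg)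
  also have "expectation ?S = (\<Sum>k\<in>{1..N}. expectation (\<lambda>x. (centred_immigration k T x)\<^sup>2))"
    using T by (intro Bochner_Integration.integral_sum integrable_centred_immigration_square) auto
  also have "\<dots> = real N * truncated_var q T"
    using T by (simp add: integral_centred_immigration_square)
  finally show ?thesis by simp
qed

end

context branching_immigration
begin

lemma prob_sum_increment_squares_le:
  fixes N B :: nat and T Q C :: real
  assumes B: "0 < B" and T: "0 < T" and Q: "0 < Q" and C: "0 \<le> C"
    and mean_generation: "\<And>k. k < N \<Longrightarrow> (\<integral>\<^sup>+x. ennreal (real (bpi X E k x)) \<partial>M) \<le> ennreal C"
  shows "prob {x\<in>space M. 16 * Q <
      (\<Sum>k\<in>{1..N}. (real (bpi X E k x) - pmean p * real (bpi X E (k - 1) x) - pmean q)\<^sup>2)}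
    \<le> real N * (C / real B + C * tail_prob p T + tail_prob q T)
      + real N * C * truncated_var p T / Q + real N * truncated_var q T / Q
      + (pmean p - truncated_mean p T) * (real N * C) / sqrt Q
      + (if Q \<le> real N * (pmean q - truncated_mean q T)\<^sup>2 then 1 else 0)"
proof -
  define dm where "dm = pmean p - truncated_mean p T"
  define dw where "dw = pmean q - truncated_mean q T"
  have dm: "0 \<le> dm" unfolding dm_def using truncated_mean_le_pmean[OF offspring_mean T] by simp
  define I where "I = (\<Union>k\<in>{1..N}. irregular_step k T B)"
  define SA where "SA = (\<lambda>x. \<Sum>k\<in>{1..N}. (centred_offspring_sum k T B x)\<^sup>2)"
  define SD where "SD = (\<lambda>x. \<Sum>k\<in>{1..N}. (centred_immigration k T x)\<^sup>2)"
  define SY where "SY = (\<lambda>x. \<Sum>k\<in>{1..N}. real (bpi X E (k - 1) x))"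
  define EA where "EA = {x\<in>space M. Q \<le> SA x}"
  define ED where "ED = {x\<in>space M. Q \<le> SD x}"
  define EM where "EM = {x\<in>space M. sqrt Q \<le> dm * SY x}"
  define EC where "EC = {x\<in>space M. Q \<le> real N * dw\<^sup>2}"
  have [measurable]: "SA \<in> borel_measurable M" "SD \<in> borel_measurable M" "SY \<in> borel_measurable M"
    unfolding SA_def SD_def SY_def by (auto intro!: borel_measurable_sum borel_measurable_power)
  have sets: "I \<in> sets M" "EA \<in> sets M" "ED \<in> sets M" "EM \<in> sets M" "EC \<in> sets M"
    unfolding EA_def ED_def EM_def EC_def I_def by (auto intro!: sets.finite_UN irregular_step_sets)
  have "{x\<in>space M. 16 * Q < (\<Sum>k\<in>{1..N}. (real (bpi X E k x) - pmean p * real (bpi X E (k - 1) x) - pmean q)\<^sup>2)}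
      \<subseteq> I \<union> EA \<union> ED \<union> EM \<union> EC"
  proof
    fix x
    assume x: "x \<in> {x\<in>space M. 16 * Q < (\<Sum>k\<in>{1..N}. (real (bpi X E k x) - pmean p * real (bpi X E (k - 1) x) - pmean q)\<^sup>2)}"
    show "x \<in> I \<union> EA \<union> ED \<union> EM \<union> EC"
    proof (rule ccontr)
      assume "x \<notin> I \<union> EA \<union> ED \<union> EM \<union> EC"
      then have "(\<Sum>k\<in>{1..N}. (real (bpi X E k x) - pmean p * real (bpi X E (k - 1) x) - pmean q)\<^sup>2) < 16 * Q"
        using x dm unfolding I_def EA_def ED_def EM_def EC_def SA_def SD_def SY_def dm_def dw_def
        by (intro sum_increment_squares_less) (auto simp: not_le)
      then show False using x by simp
    qed
  qed
  then have "prob {x\<in>space M. 16 * Q < (\<Sum>k\<in>{1..N}. (real (bpi X E k x) - pmean p * real (bpi X E (k - 1) x) - pmean q)\<^sup>2)}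
      \<le> prob (I \<union> EA \<union> ED \<union> EM \<union> EC)"
    using sets by (intro finite_measure_mono) auto
  also have "\<dots> \<le> prob I + prob EA + prob ED + prob EM + prob EC"
  proof -
    have "prob (I \<union> EA \<union> ED \<union> EM \<union> EC) \<le> prob (I \<union> EA \<union> ED \<union> EM) + prob EC"
      and "prob (I \<union> EA \<union> ED \<union> EM) \<le> prob (I \<union> EA \<union> ED) + prob EM"
      and "prob (I \<union> EA \<union> ED) \<le> prob (I \<union> EA) + prob ED"
      and "prob (I \<union> EA) \<le> prob I + prob EA"
      using sets by (auto intro!: measure_Un_le)
    then show ?thesis by linarith
  qed
  also have "\<dots> \<le> real N * (C / real B + C * tail_prob p T + tail_prob q T)
      + real N * C * truncated_var p T / Q + real N * truncated_var q T / Q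
      + dm * (real N * C) / sqrt Q + (if Q \<le> real N * dw\<^sup>2 then 1 else 0)"
    unfolding I_def EA_def ED_def EM_def EC_def SA_def SD_def SY_def
    using prob_irregular_steps_le[OF C mean_generation B] prob_sum_centred_offspring_squares_ge[OF C mean_generation T Q]
      prob_sum_centred_immigration_squares_ge[OF T Q] prob_sum_generations_ge[OF C mean_generation _ dm, where a="sqrt Q"] Q
    by (intro add_mono) (auto simp: prob_space)
  finally show ?thesis unfolding dm_def dw_def .
qed

end

lemma truncated_var_le_near_critical:
  assumes mean: "integrable (measure_pmf p) real" and c: "2 \<le> c" and R: "2 \<le> R"
    and m: "pmean p \<le> 2" and gap: "measure_pmf.expectation p (pgf_gap (1/c)) \<le> K"
  shows "truncated_var p (R * c) \<le> (2 * exp 4 + 2 * R) * c\<^sup>2 * K + 2 * (\<bar>1 - pmean p\<bar> + 2 * c * K)"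
proof -
  let ?m = "truncated_mean p (R * c)"
  have T: "0 < R * c" using c R by simp
  have "?m * (1 - ?m) \<le> 2 * (\<bar>1 - pmean p\<bar> + 2 * c * K)"
  proof (cases "?m \<le> 1")
    case True
    have "2 * c * measure_pmf.expectation p (pgf_gap (1/c)) \<le> 2 * c * K"
      using gap c by (intro mult_left_mono) auto
    then have "pmean p - ?m \<le> 2 * c * K"
      using pmean_minus_truncated_mean_le[OF mean _ R, of c] c by linarith
    then have "1 - ?m \<le> \<bar>1 - pmean p\<bar> + 2 * c * K" by linarith
    moreover have "?m \<le> 2" using truncated_mean_le_pmean[OF mean T] m by simp
    ultimately show ?thesis using True truncated_mean_nonneg[of p] by (intro mult_mono) auto
  next
    case False
    then have "?m * (1 - ?m) \<le> 0" using truncated_mean_nonneg[of p] by (simp add: mult_nonneg_nonpos)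
    moreover have "0 \<le> K" using gap expectation_pgf_gap_nonneg[OF mean, of c] c by simp
    then have "0 \<le> 2 * c * K" using c by simp
    ultimately show ?thesis by (smt (verit) abs_ge_zero)
  qed
  moreover have "(2 * exp 4 + 2 * R) * c\<^sup>2 * measure_pmf.expectation p (pgf_gap (1/c))
      \<le> (2 * exp 4 + 2 * R) * c\<^sup>2 * K"
    using gap R by (intro mult_left_mono) auto
  ultimately show ?thesis using truncated_var_le[OF mean _ c R] c by linarith
qed

lemma truncated_var_le_pmean:
  assumes mean: "integrable (measure_pmf q) real" and c: "2 \<le> c" and R: "2 \<le> R"
    and gap: "measure_pmf.expectation q (pgf_gap (1/c)) \<le> K"
  shows "truncated_var q (R * c) \<le> (2 * exp 4 + 2 * R) * c\<^sup>2 * K + pmean q"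
proof -
  let ?m = "truncated_mean q (R * c)"
  have "?m * (1 - ?m) \<le> pmean q"
    using truncated_mean_nonneg[of q] truncated_mean_le_pmean[OF mean, of "R * c"] c R
    by (simp add: algebra_simps) (smt (verit) mult_nonneg_nonneg)
  moreover have "(2 * exp 4 + 2 * R) * c\<^sup>2 * measure_pmf.expectation q (pgf_gap (1/c))
      \<le> (2 * exp 4 + 2 * R) * c\<^sup>2 * K"
    using gap R by (intro mult_left_mono) auto
  ultimately show ?thesis using truncated_var_le[OF mean _ c R] c by linarith
qed

text \<open>The contributions to the estimate of \<open>prob_sum_increment_squares_le\<close> at truncation
  level \<open>R c\<close>, for \<open>Q = \<epsilon> n c / 16\<close>, when the pgf gaps are of order \<open>1/n\<^sup>2\<close> (offspring) and \<open>1/n\<close>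
  (immigration).\<close>

lemma tail_terms_le:
  assumes mean_p: "integrable (measure_pmf p) real" and mean_q: "integrable (measure_pmf q) real"
    and c: "2 \<le> c" and R: "2 \<le> R" and n: "0 < n" and Cy: "0 \<le> Cy"
    and gap_p: "measure_pmf.expectation p (pgf_gap (1/c)) \<le> KG / (real n)\<^sup>2"
    and gap_q: "measure_pmf.expectation q (pgf_gap (1/c)) \<le> KH / real n"
  shows "real n * (Cy * real n / real (n ^ 3) + Cy * real n * tail_prob p (R * c) + tail_prob q (R * c))
    \<le> Cy / real n + 2 * (Cy * KG + KH) / R"
proof -
  have tail_p: "tail_prob p (R * c) \<le> (2 / R) * (KG / (real n)\<^sup>2)"
    and tail_q: "tail_prob q (R * c) \<le> (2 / R) * (KH / real n)"
    using tail_prob_le_pgf_gap[OF mean_p _ R, of c] tail_prob_le_pgf_gap[OF mean_q _ R, of c]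
      mult_left_mono[OF gap_p, of "2 / R"] mult_left_mono[OF gap_q, of "2 / R"] c R
    by auto
  have "real n * (Cy * real n * tail_prob p (R * c)) \<le> real n * (Cy * real n * ((2 / R) * (KG / (real n)\<^sup>2)))"
    and "real n * tail_prob q (R * c) \<le> real n * ((2 / R) * (KH / real n))"
    by (intro mult_left_mono tail_p tail_q; use Cy in simp)+
  moreover have "real n * (Cy * real n * ((2 / R) * (KG / (real n)\<^sup>2))) = 2 * Cy * KG / R"
    and "real n * ((2 / R) * (KH / real n)) = 2 * KH / R"
    using n by (simp_all add: power2_eq_square)
  moreover have "real n * (Cy * real n / real (n ^ 3)) = Cy / real n"
    using n by (simp add: field_simps power3_eq_cube)
  ultimately show ?thesis by (simp add: distrib_left add_divide_distrib)
qed

lemma offspring_variance_term_le: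
  assumes mean: "integrable (measure_pmf p) real" and c: "2 \<le> c" and R: "2 \<le> R"
    and n: "0 < n" and \<epsilon>: "0 < \<epsilon>" and Cy: "0 \<le> Cy" and m: "pmean p \<le> 2"
    and gap: "measure_pmf.expectation p (pgf_gap (1/c)) \<le> KG / (real n)\<^sup>2"
  shows "real n * (Cy * real n) * truncated_var p (R * c) / (\<epsilon> * real n * c / 16)
    \<le> 16 * Cy / \<epsilon> * ((2 * exp 4 + 2 * R) * KG * (c / real n) + 2 * \<bar>real n * (pmean p - 1)\<bar> / c + 4 * KG / real n)"
proof -
  have "\<bar>1 - pmean p\<bar> = \<bar>real n * (pmean p - 1)\<bar> / real n"
    using n by (simp add: abs_mult abs_minus_commute)
  then have "truncated_var p (R * c) \<le> (2 * exp 4 + 2 * R) * c\<^sup>2 * (KG / (real n)\<^sup>2)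
      + 2 * (\<bar>real n * (pmean p - 1)\<bar> / real n + 2 * c * (KG / (real n)\<^sup>2))"
    using truncated_var_le_near_critical[OF mean c R m gap] by simp
  then have "real n * (Cy * real n) * truncated_var p (R * c) / (\<epsilon> * real n * c / 16)
      \<le> real n * (Cy * real n) * ((2 * exp 4 + 2 * R) * c\<^sup>2 * (KG / (real n)\<^sup>2)
        + 2 * (\<bar>real n * (pmean p - 1)\<bar> / real n + 2 * c * (KG / (real n)\<^sup>2))) / (\<epsilon> * real n * c / 16)"
    using Cy n c \<epsilon> by (intro divide_right_mono mult_left_mono) auto
  also have "\<dots> = 16 * Cy / \<epsilon> * ((2 * exp 4 + 2 * R) * KG * (c / real n)
      + 2 * \<bar>real n * (pmean p - 1)\<bar> / c + 4 * KG / real n)"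
    using n c \<epsilon> by (simp add: field_simps power2_eq_square)
  finally show ?thesis .
qed

lemma immigration_variance_term_le:
  assumes mean: "integrable (measure_pmf q) real" and c: "2 \<le> c" and R: "2 \<le> R"
    and n: "0 < n" and \<epsilon>: "0 < \<epsilon>"
    and gap: "measure_pmf.expectation q (pgf_gap (1/c)) \<le> KH / real n"
  shows "real n * truncated_var q (R * c) / (\<epsilon> * real n * c / 16)
    \<le> 16 / \<epsilon> * ((2 * exp 4 + 2 * R) * KH * (c / real n) + pmean q / c)"
proof -
  have "real n * truncated_var q (R * c) / (\<epsilon> * real n * c / 16)
      \<le> real n * ((2 * exp 4 + 2 * R) * c\<^sup>2 * (KH / real n) + pmean q) / (\<epsilon> * real n * c / 16)"
    using truncated_var_le_pmean[OF mean c R gap] n c \<epsilon> by (intro divide_right_mono mult_left_mono) auto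
  also have "\<dots> = 16 / \<epsilon> * ((2 * exp 4 + 2 * R) * KH * (c / real n) + pmean q / c)"
    using n c \<epsilon> by (simp add: field_simps power2_eq_square)
  finally show ?thesis .
qed

lemma offspring_mean_defect_term_le:
  assumes mean: "integrable (measure_pmf p) real" and c: "2 \<le> c" and R: "2 \<le> R"
    and n: "0 < n" and \<epsilon>: "0 < \<epsilon>" and Cy: "0 \<le> Cy"
    and gap: "measure_pmf.expectation p (pgf_gap (1/c)) \<le> KG / (real n)\<^sup>2"
  shows "(pmean p - truncated_mean p (R * c)) * (real n * (Cy * real n)) / sqrt (\<epsilon> * real n * c / 16)
    \<le> 8 * Cy * KG * sqrt ((c / real n) / \<epsilon>)"
proof -
  define Q where "Q = \<epsilon> * real n * c / 16"
  have Q: "0 < Q" using n c \<epsilon> by (simp add: Q_def)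
  have "pmean p - truncated_mean p (R * c) \<le> 2 * c * (KG / (real n)\<^sup>2)"
    using pmean_minus_truncated_mean_le[OF mean _ R, of c] mult_left_mono[OF gap, of "2 * c"] c
    by linarith
  then have "(pmean p - truncated_mean p (R * c)) * (real n * (Cy * real n)) / sqrt Q
      \<le> 2 * c * (KG / (real n)\<^sup>2) * (real n * (Cy * real n)) / sqrt Q"
    using Cy Q by (intro divide_right_mono mult_right_mono) auto
  also have "\<dots> = 2 * c * KG * Cy / sqrt Q" using n by (simp add: field_simps power2_eq_square)
  also have "\<dots> = 8 * Cy * KG * sqrt ((c / real n) / \<epsilon>)"
  proof -
    have "sqrt ((c / real n) / \<epsilon>) * sqrt Q = sqrt (((c / real n) / \<epsilon>) * Q)"
      by (rule real_sqrt_mult[symmetric])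
    also have "((c / real n) / \<epsilon>) * Q = (c / 4)\<^sup>2"
      using n \<epsilon> unfolding Q_def by (simp add: field_simps power2_eq_square)
    finally have "c = 4 * (sqrt ((c / real n) / \<epsilon>) * sqrt Q)" using c by simp
    then show ?thesis using Q by (simp add: field_simps)
  qed
  finally show ?thesis unfolding Q_def .
qed

lemma immigration_mean_defect_term_le:
  assumes mean: "integrable (measure_pmf q) real" and c: "2 \<le> c" and R: "2 \<le> R" and n: "0 < n"
    and gap: "measure_pmf.expectation q (pgf_gap (1/c)) \<le> KH / real n"
  shows "(if \<epsilon> * real n * c / 16 \<le> real n * (pmean q - truncated_mean q (R * c))\<^sup>2 then 1 else 0)
    \<le> (if \<epsilon> \<le> 64 * (c / real n) * (1 / real n) * KH\<^sup>2 then 1 else (0::real))"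
proof -
  have "pmean q - truncated_mean q (R * c) \<le> 2 * c * (KH / real n)"
    using pmean_minus_truncated_mean_le[OF mean _ R, of c] mult_left_mono[OF gap, of "2 * c"] c
    by linarith
  then have "(pmean q - truncated_mean q (R * c))\<^sup>2 \<le> (2 * c * (KH / real n))\<^sup>2"
    using truncated_mean_le_pmean[OF mean, of "R * c"] c R by (intro power_mono) auto
  then have "real n * (pmean q - truncated_mean q (R * c))\<^sup>2 \<le> real n * (2 * c * (KH / real n))\<^sup>2"
    using n by (intro mult_left_mono) auto
  also have "\<dots> = 64 * (c / real n) * (1 / real n) * KH\<^sup>2 * (real n * c / 16)"
    using n c by (simp add: field_simps power2_eq_square)
  finally have "\<epsilon> * real n * c / 16 \<le> real n * (pmean q - truncated_mean q (R * c))\<^sup>2 \<Longrightarrow>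
      \<epsilon> * (real n * c / 16) \<le> 64 * (c / real n) * (1 / real n) * KH\<^sup>2 * (real n * c / 16)"
    by (simp add: mult.assoc)
  moreover have "0 < real n * c / 16" using n c by simp
  ultimately have "\<epsilon> * real n * c / 16 \<le> real n * (pmean q - truncated_mean q (R * c))\<^sup>2 \<Longrightarrow>
      \<epsilon> \<le> 64 * (c / real n) * (1 / real n) * KH\<^sup>2"
    by (meson mult_right_le_imp_le)
  then show ?thesis by simp
qed

context branching_immigration
begin

lemma prob_normalised_sum_increment_squares_le:
  fixes n :: nat and c R \<epsilon> Cy KG KH :: real
  assumes n: "1 \<le> n" and c: "2 \<le> c" and R: "2 \<le> R" and \<epsilon>: "0 < \<epsilon>" and Cy: "0 \<le> Cy"
    and gap_p: "measure_pmf.expectation p (pgf_gap (1/c)) \<le> KG / (real n)\<^sup>2"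
    and gap_q: "measure_pmf.expectation q (pgf_gap (1/c)) \<le> KH / real n"
    and m: "pmean p \<le> 2"
    and mean_generation: "\<And>k. k < n \<Longrightarrow> (\<integral>\<^sup>+x. ennreal (real (bpi X E k x)) \<partial>M) \<le> ennreal (Cy * real n)"
  shows "prob {x \<in> space M. \<bar>(1 / (real n * c)) * (\<Sum>k\<in>{1..n}.
              (real (bpi X E k x) - pmean p * real (bpi X E (k - 1) x) - pmean q)\<^sup>2)\<bar> > \<epsilon>}
    \<le> Cy / real n + 2 * (Cy * KG + KH) / R
      + 16 * Cy / \<epsilon> * ((2 * exp 4 + 2 * R) * KG * (c / real n) + 2 * \<bar>real n * (pmean p - 1)\<bar> / c + 4 * KG / real n)
      + 16 / \<epsilon> * ((2 * exp 4 + 2 * R) * KH * (c / real n) + pmean q / c)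
      + 8 * Cy * KG * sqrt ((c / real n) / \<epsilon>)
      + (if \<epsilon> \<le> 64 * (c / real n) * (1 / real n) * KH\<^sup>2 then 1 else 0)"
proof -
  define Q where "Q = \<epsilon> * real n * c / 16"
  have n0: "0 < n" and Q: "0 < Q" using n c \<epsilon> by (auto simp: Q_def)
  have "\<bar>(1 / (real n * c)) * S\<bar> > \<epsilon> \<longleftrightarrow> 16 * Q < S" if "0 \<le> S" for S
  proof -
    have "\<bar>(1 / (real n * c)) * S\<bar> = S / (real n * c)" using that n0 c by simp
    then show ?thesis using n0 c by (simp add: Q_def pos_less_divide_eq mult.assoc)
  qed
  then have "{x \<in> space M. \<bar>(1 / (real n * c)) * (\<Sum>k\<in>{1..n}.
          (real (bpi X E k x) - pmean p * real (bpi X E (k - 1) x) - pmean q)\<^sup>2)\<bar> > \<epsilon>}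
      = {x \<in> space M. 16 * Q < (\<Sum>k\<in>{1..n}.
          (real (bpi X E k x) - pmean p * real (bpi X E (k - 1) x) - pmean q)\<^sup>2)}"
    by (simp add: sum_nonneg)
  also have "prob \<dots> \<le> real n * (Cy * real n / real (n ^ 3) + Cy * real n * tail_prob p (R * c) + tail_prob q (R * c))
      + real n * (Cy * real n) * truncated_var p (R * c) / Q + real n * truncated_var q (R * c) / Q
      + (pmean p - truncated_mean p (R * c)) * (real n * (Cy * real n)) / sqrt Q
      + (if Q \<le> real n * (pmean q - truncated_mean q (R * c))\<^sup>2 then 1 else 0)"
    using n c R Q Cy mean_generation by (intro prob_sum_increment_squares_le) auto
  also have "\<dots> \<le> Cy / real n + 2 * (Cy * KG + KH) / R
      + 16 * Cy / \<epsilon> * ((2 * exp 4 + 2 * R) * KG * (c / real n) + 2 * \<bar>real n * (pmean p - 1)\<bar> / c + 4 * KG / real n)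
      + 16 / \<epsilon> * ((2 * exp 4 + 2 * R) * KH * (c / real n) + pmean q / c)
      + 8 * Cy * KG * sqrt ((c / real n) / \<epsilon>)
      + (if \<epsilon> \<le> 64 * (c / real n) * (1 / real n) * KH\<^sup>2 then 1 else 0)"
    unfolding Q_def
    using tail_terms_le[OF offspring_mean immigration_mean c R n0 Cy gap_p gap_q]
      offspring_variance_term_le[OF offspring_mean c R n0 \<epsilon> Cy m gap_p]
      immigration_variance_term_le[OF immigration_mean c R n0 \<epsilon> gap_q]
      offspring_mean_defect_term_le[OF offspring_mean c R n0 \<epsilon> Cy gap_p]
      immigration_mean_defect_term_le[OF immigration_mean c R n0 gap_q, of \<epsilon>]
    by linarith
  finally show ?thesis .
qed

end

section \<open>Asymptotics\<close>

lemma filterlim_at_top_if_real_div_square_convergent: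
  fixes c :: "nat \<Rightarrow> real"
  assumes pos: "\<And>n. 0 < c n" and lim: "(\<lambda>n. real n / (c n)\<^sup>2) \<longlonglongrightarrow> \<gamma>"
  shows "filterlim c at_top sequentially"
  unfolding filterlim_at_top
proof
  fix Z :: real
  have "0 \<le> \<gamma>" using pos by (intro LIMSEQ_le_const[OF lim]) auto
  have "eventually (\<lambda>n. real n / (c n)\<^sup>2 < \<gamma> + 1) sequentially"
    using lim by (rule order_tendstoD) simp
  moreover have "eventually (\<lambda>n. (\<gamma> + 1) * Z\<^sup>2 + 1 \<le> real n) sequentially"
    using filterlim_real_sequentially unfolding filterlim_at_top by auto
  ultimately show "eventually (\<lambda>n. Z \<le> c n) sequentially"
  proof eventually_elim
    case (elim n)
    have "real n < (\<gamma> + 1) * (c n)\<^sup>2" using elim(1) pos[of n] by (simp add: field_simps)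
    then have "Z\<^sup>2 < (c n)\<^sup>2" using elim(2) \<open>0 \<le> \<gamma>\<close> by (smt (verit) mult_le_cancel_left)
    then show ?case using pos[of n] by (smt (verit) power2_abs power_mono)
  qed
qed

text \<open>At \<open>s = 0\<close> the bracket \<open>(1 - \<mu> s / c) - g(1 - s / c)\<close> vanishes and at \<open>s = 1\<close> it is minus the mean
  pgf gap, so a Lipschitz bound between these two points suffices.\<close>

lemma expectation_pgf_gap_le:
  assumes mean: "integrable (measure_pmf p) real" and c: "1 \<le> c" and w: "0 < w"
    and lipschitz: "\<bar>w * ((1 - pmean p * 1 / c) - pgf p (1 - 1 / c))
        - w * ((1 - pmean p * 0 / c) - pgf p (1 - 0 / c))\<bar> \<le> K * \<bar>1 - 0\<bar>"
  shows "measure_pmf.expectation p (pgf_gap (1/c)) \<le> K / w"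
proof -
  have "pgf p 1 = 1" by (simp add: pgf_def)
  then have "\<bar>w * measure_pmf.expectation p (pgf_gap (1/c))\<bar> \<le> K"
    using lipschitz by (simp add: expectation_pgf_gap[OF mean c] algebra_simps)
  then show ?thesis using w by (simp add: field_simps abs_le_iff)
qed

lemma tendsto_zero_if_bounded_up_to_inverse:
  fixes P :: "nat \<Rightarrow> real"
  assumes K: "0 \<le> K" and nonneg: "\<And>n. 0 \<le> P n"
    and bound: "\<And>R. 2 \<le> R \<Longrightarrow> \<exists>f. f \<longlonglongrightarrow> 0 \<and> eventually (\<lambda>n. P n \<le> K / R + f n) sequentially"
  shows "P \<longlonglongrightarrow> 0"
proof (rule tendstoI)
  fix \<delta> :: real assume \<delta>: "0 < \<delta>"
  define R where "R = 2 + 2 * K / \<delta>"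
  have R: "2 \<le> R" using K \<delta> by (simp add: R_def)
  have "K < R * \<delta>" using K \<delta> by (simp add: R_def algebra_simps)
  then have "K / R < \<delta>" using R by (simp add: pos_divide_less_eq mult.commute)
  obtain f where "f \<longlonglongrightarrow> 0" and le: "eventually (\<lambda>n. P n \<le> K / R + f n) sequentially"
    using bound[OF R] by blast
  then have "eventually (\<lambda>n. f n < \<delta> - K / R) sequentially"
    using \<open>K / R < \<delta>\<close> by (intro order_tendstoD) auto
  with le show "eventually (\<lambda>n. dist (P n) 0 < \<delta>) sequentially"
    by eventually_elim (use nonneg in auto)
qed

lemma eventually_expectation_pgf_gap_le:
  fixes p :: "nat \<Rightarrow> nat pmf" and c w :: "nat \<Rightarrow> real" and F :: "nat \<Rightarrow> real \<Rightarrow> real"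
  assumes mean: "\<And>n. integrable (measure_pmf (p n)) real" and c: "filterlim c at_top sequentially"
    and w: "\<forall>\<^sub>F n in sequentially. 0 < w n"
    and F: "\<And>n s. F n s = w n * ((1 - pmean (p n) * s / c n) - pgf (p n) (1 - s / c n))"
    and lipschitz: "\<forall>\<^sub>F n in sequentially. \<forall>x\<in>{0..1}. \<forall>y\<in>{0..1}. \<bar>F n x - F n y\<bar> \<le> K * \<bar>x - y\<bar>"
  shows "\<forall>\<^sub>F n in sequentially. measure_pmf.expectation (p n) (pgf_gap (1 / c n)) \<le> max K 0 / w n"
proof -
  have "\<forall>\<^sub>F n in sequentially. 1 \<le> c n" using c by (simp add: filterlim_at_top)
  with w lipschitz show ?thesis
  proof eventually_elim
    case (elim n)
    then have lip: "\<bar>F n 1 - F n 0\<bar> \<le> K * \<bar>1 - 0\<bar>" by (metis atLeastAtMost_iff order_refl zero_le_one)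
    have "measure_pmf.expectation (p n) (pgf_gap (1 / c n)) \<le> K / w n"
      using expectation_pgf_gap_le[OF mean _ _ lip[unfolded F]] elim by auto
    moreover have "K / w n \<le> max K 0 / w n" using elim by (simp add: divide_right_mono)
    ultimately show ?case by linarith
  qed
qed

lemma tendsto_one_if_scaled_deviation_convergent:
  fixes f :: "nat \<Rightarrow> real"
  assumes "(\<lambda>n. real n * (f n - 1)) \<longlonglongrightarrow> a"
  shows "f \<longlonglongrightarrow> 1"
proof -
  have "(\<lambda>n. real n * (f n - 1) * (1 / real n) + 1) \<longlonglongrightarrow> a * 0 + 1"
    by (intro tendsto_intros assms lim_1_over_n)
  moreover have "\<forall>\<^sub>F n in sequentially. real n * (f n - 1) * (1 / real n) + 1 = f n"
    using eventually_gt_at_top[of 0] by eventually_elim simp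
  ultimately show ?thesis by (simp add: tendsto_cong)
qed

lemma eventually_nn_integral_generation_le_linear:
  fixes M :: "nat \<Rightarrow> 'a measure" and X :: "nat \<Rightarrow> nat \<Rightarrow> nat \<Rightarrow> 'a \<Rightarrow> nat"
    and E :: "nat \<Rightarrow> nat \<Rightarrow> 'a \<Rightarrow> nat" and p q :: "nat \<Rightarrow> nat pmf"
  assumes process: "\<And>n. branching_immigration (M n) (X n) (E n) (p n) (q n)"
    and m: "(\<lambda>n. real n * (pmean (p n) - 1)) \<longlonglongrightarrow> a" and w: "(\<lambda>n. pmean (q n)) \<longlonglongrightarrow> \<omega>"
  shows "\<forall>\<^sub>F n in sequentially. \<forall>k<n.
    (\<integral>\<^sup>+x. ennreal (real (bpi (X n) (E n) k x)) \<partial>M n) \<le> ennreal ((\<bar>\<omega>\<bar> + 1) * exp (\<bar>a\<bar> + 1) * real n)"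
proof -
  have "\<forall>\<^sub>F n in sequentially. real n * (pmean (p n) - 1) < \<bar>a\<bar> + 1"
    by (rule order_tendstoD[OF m]) simp
  moreover have "\<forall>\<^sub>F n in sequentially. pmean (q n) < \<bar>\<omega>\<bar> + 1"
    by (rule order_tendstoD[OF w]) simp
  ultimately show ?thesis
  proof eventually_elim
    case (elim n)
    interpret branching_immigration "M n" "X n" "E n" "p n" "q n" by (rule process)
    have "real n * pmean (q n) * exp (\<bar>a\<bar> + 1) \<le> (\<bar>\<omega>\<bar> + 1) * exp (\<bar>a\<bar> + 1) * real n"
      using elim pmean_nonneg[of "q n"] by (simp add: mult_right_mono mult_left_mono mult.commute)
    then have le: "ennreal (real n * pmean (q n) * exp (\<bar>a\<bar> + 1)) \<le> ennreal ((\<bar>\<omega>\<bar> + 1) * exp (\<bar>a\<bar> + 1) * real n)"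
      by (rule ennreal_leI)
    have "(\<integral>\<^sup>+x. ennreal (real (bpi (X n) (E n) k x)) \<partial>M n) \<le> ennreal (real n * pmean (q n) * exp (\<bar>a\<bar> + 1))"
      if "k < n" for k
      using elim that by (intro nn_integral_generation_le_linear) auto
    then show ?case using le by (blast intro: order.trans)
  qed
qed

lemma tendsto_prob_normalised_sum_increment_squares:
  fixes M :: "nat \<Rightarrow> 'a measure" and X :: "nat \<Rightarrow> nat \<Rightarrow> nat \<Rightarrow> 'a \<Rightarrow> nat"
    and E :: "nat \<Rightarrow> nat \<Rightarrow> 'a \<Rightarrow> nat" and p q :: "nat \<Rightarrow> nat pmf" and c :: "nat \<Rightarrow> real"
  assumes process: "\<And>n. branching_immigration (M n) (X n) (E n) (p n) (q n)"
    and c: "filterlim c at_top sequentially" and c_n: "(\<lambda>n. c n / real n) \<longlonglongrightarrow> 0"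
    and m: "(\<lambda>n. real n * (pmean (p n) - 1)) \<longlonglongrightarrow> a" and w: "(\<lambda>n. pmean (q n)) \<longlonglongrightarrow> \<omega>"
    and gap_p: "\<forall>\<^sub>F n in sequentially. measure_pmf.expectation (p n) (pgf_gap (1 / c n)) \<le> KG / (real n)\<^sup>2"
    and gap_q: "\<forall>\<^sub>F n in sequentially. measure_pmf.expectation (q n) (pgf_gap (1 / c n)) \<le> KH / real n"
    and KG: "0 \<le> KG" and KH: "0 \<le> KH" and \<epsilon>: "0 < \<epsilon>"
  shows "(\<lambda>n. measure (M n) {x \<in> space (M n). \<bar>(1 / (real n * c n)) * (\<Sum>k\<in>{1..n}.
      (real (bpi (X n) (E n) k x) - pmean (p n) * real (bpi (X n) (E n) (k - 1) x) - pmean (q n))\<^sup>2)\<bar> > \<epsilon>})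
    \<longlonglongrightarrow> 0"
proof -
  define Cy where "Cy = (\<bar>\<omega>\<bar> + 1) * exp (\<bar>a\<bar> + 1)"
  have Cy: "0 \<le> Cy" by (simp add: Cy_def)
  have "\<forall>\<^sub>F n in sequentially. pmean (p n) < 2"
    by (rule order_tendstoD[OF tendsto_one_if_scaled_deviation_convergent[OF m]]) simp
  moreover have "\<forall>\<^sub>F n in sequentially. 2 \<le> c n" using c by (simp add: filterlim_at_top)
  moreover note eventually_nn_integral_generation_le_linear[OF process m w]
  ultimately have hyps: "\<forall>\<^sub>F n in sequentially. 1 \<le> n \<and> 2 \<le> c n \<and> pmean (p n) \<le> 2 \<and>
      measure_pmf.expectation (p n) (pgf_gap (1 / c n)) \<le> KG / (real n)\<^sup>2 \<and>
      measure_pmf.expectation (q n) (pgf_gap (1 / c n)) \<le> KH / real n \<and>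
      (\<forall>k<n. (\<integral>\<^sup>+x. ennreal (real (bpi (X n) (E n) k x)) \<partial>M n) \<le> ennreal (Cy * real n))"
    using gap_p gap_q eventually_ge_at_top[of 1] unfolding Cy_def by eventually_elim (simp add: less_imp_le)
  show ?thesis
  proof (rule tendsto_zero_if_bounded_up_to_inverse[where K="2 * (Cy * KG + KH)"])
    fix R :: real assume R: "2 \<le> R"
    define f where "f = (\<lambda>n. Cy * (1 / real n)
      + 16 * Cy / \<epsilon> * ((2 * exp 4 + 2 * R) * KG * (c n / real n) + 2 * \<bar>real n * (pmean (p n) - 1)\<bar> * (1 / c n)
          + 4 * KG * (1 / real n))
      + 16 / \<epsilon> * ((2 * exp 4 + 2 * R) * KH * (c n / real n) + pmean (q n) * (1 / c n))
      + 8 * Cy * KG * sqrt ((c n / real n) / \<epsilon>))"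
    define g where "g = (\<lambda>n. if \<epsilon> \<le> 64 * (c n / real n) * (1 / real n) * KH\<^sup>2 then 1 else 0 :: real)"
    have "f \<longlonglongrightarrow> Cy * 0 + 16 * Cy / \<epsilon> * ((2 * exp 4 + 2 * R) * KG * 0 + 2 * \<bar>a\<bar> * 0 + 4 * KG * 0)
        + 16 / \<epsilon> * ((2 * exp 4 + 2 * R) * KH * 0 + \<omega> * 0) + 8 * Cy * KG * sqrt (0 / \<epsilon>)"
      unfolding f_def using tendsto_inverse_0_at_top[OF c] \<epsilon>
      by (intro tendsto_intros lim_1_over_n c_n m w) (auto simp: inverse_eq_divide)
    moreover have "\<forall>\<^sub>F n in sequentially. 64 * (c n / real n) * (1 / real n) * KH\<^sup>2 < \<epsilon>"
      using \<epsilon> by (intro order_tendstoD[of _ "64 * 0 * 0 * KH\<^sup>2"] tendsto_intros c_n lim_1_over_n) auto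
    then have "g \<longlonglongrightarrow> 0" unfolding g_def by (rule tendsto_eventually[OF eventually_mono]) auto
    ultimately have "(\<lambda>n. f n + g n) \<longlonglongrightarrow> 0" using tendsto_add by fastforce
    moreover have "\<forall>\<^sub>F n in sequentially. measure (M n) {x \<in> space (M n). \<bar>(1 / (real n * c n)) * (\<Sum>k\<in>{1..n}.
        (real (bpi (X n) (E n) k x) - pmean (p n) * real (bpi (X n) (E n) (k - 1) x) - pmean (q n))\<^sup>2)\<bar> > \<epsilon>}
      \<le> 2 * (Cy * KG + KH) / R + (f n + g n)"
      using hyps
    proof eventually_elim
      case (elim n)
      interpret branching_immigration "M n" "X n" "E n" "p n" "q n" by (rule process)
      show ?case
        using prob_normalised_sum_increment_squares_le[OF _ _ R \<epsilon> Cy, where n=n and c="c n" and KG=KG and KH=KH] elim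
        by (simp add: f_def g_def)
    qed
    ultimately show "\<exists>f. f \<longlonglongrightarrow> 0 \<and> (\<forall>\<^sub>F n in sequentially. measure (M n) {x \<in> space (M n).
        \<bar>(1 / (real n * c n)) * (\<Sum>k\<in>{1..n}. (real (bpi (X n) (E n) k x) - pmean (p n)
          * real (bpi (X n) (E n) (k - 1) x) - pmean (q n))\<^sup>2)\<bar> > \<epsilon>}
      \<le> 2 * (Cy * KG + KH) / R + f n)"
      by blast
  qed (use Cy KG KH in auto)
qed

theorem lemma4p5:
  fixes M :: "nat \<Rightarrow> 'a measure"
    and xi :: "nat \<Rightarrow> nat \<Rightarrow> nat \<Rightarrow> 'a \<Rightarrow> nat"
    and eta :: "nat \<Rightarrow> nat \<Rightarrow> 'a \<Rightarrow> nat"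
    and p q :: "nat \<Rightarrow> nat pmf"
    and c :: "nat \<Rightarrow> real"
    and m \<omega>n :: "nat \<Rightarrow> real"
    and G H :: "nat \<Rightarrow> real \<Rightarrow> real"
    and \<gamma>0 a \<omega> :: real
  assumes prob: "\<And>n. prob_space (M n)"
    and indep: "\<And>n. prob_space.indep_vars (M n) (\<lambda>_. count_space UNIV)
        (\<lambda>i. case i of Inl (k, j) \<Rightarrow> xi n k j | Inr k \<Rightarrow> eta n k)
        ({(k, j). 1 \<le> k \<and> 1 \<le> j} <+> {k. 1 \<le> k})"
    and distr_xi: "\<And>n k j. 1 \<le> k \<Longrightarrow> 1 \<le> j \<Longrightarrow>
        distr (M n) (count_space UNIV) (xi n k j) = measure_pmf (p n)"
    and distr_eta: "\<And>n k. 1 \<le> k \<Longrightarrow>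
        distr (M n) (count_space UNIV) (eta n k) = measure_pmf (q n)"
    and mean_xi_finite: "\<And>n. integrable (measure_pmf (p n)) real"
    and mean_eta_finite: "\<And>n. integrable (measure_pmf (q n)) real"
    and m_def: "\<And>n. m n = pmean (p n)"
    and \<omega>n_def: "\<And>n. \<omega>n n = pmean (q n)"
    and c_pos: "\<And>n. c n > 0"
    and G_def: "\<And>n s. G n s = (real n)\<^sup>2 * ((1 - m n * s / c n) - pgf (p n) (1 - s / c n))"
    and H_def: "\<And>n s. H n s = real n * ((1 - \<omega>n n * s / c n) - pgf (q n) (1 - s / c n))"
    and C1: "filterlim (\<lambda>n. real n / c n) at_top sequentially"
    and C2: "(\<lambda>n. real n / (c n)\<^sup>2) \<longlonglongrightarrow> \<gamma>0" and "\<gamma>0 \<ge> 0"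
    and D1: "(\<lambda>n. real n * (m n - 1)) \<longlonglongrightarrow> a"
    and D2_lip: "\<And>L. \<exists>K. \<forall>\<^sub>F n in sequentially. \<forall>x\<in>{0..L}. \<forall>y\<in>{0..L}.
        \<bar>G n x - G n y\<bar> \<le> K * \<bar>x - y\<bar>"
    and D2_lim: "\<exists>G0. continuous_on {0..} G0 \<and> (\<forall>s\<ge>0. (\<lambda>n. G n s) \<longlonglongrightarrow> G0 s)"
    and E1: "\<omega>n \<longlonglongrightarrow> \<omega>" and "\<omega> \<ge> 0"
    and E2_lip: "\<And>L. \<exists>K. \<forall>\<^sub>F n in sequentially. \<forall>x\<in>{0..L}. \<forall>y\<in>{0..L}.
        \<bar>H n x - H n y\<bar> \<le> K * \<bar>x - y\<bar>"
    and E2_lim: "\<exists>H0. continuous_on {0..} H0 \<and> (\<forall>s\<ge>0. (\<lambda>n. H n s) \<longlonglongrightarrow> H0 s)"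
  shows "\<forall>\<epsilon>>0. (\<lambda>n. measure (M n) {x \<in> space (M n).
           \<bar>(1 / (real n * c n)) * (\<Sum>k\<in>{1..n}.
              (real (bpi (xi n) (eta n) k x) - m n * real (bpi (xi n) (eta n) (k - 1) x) - \<omega>n n)\<^sup>2)\<bar>
           > \<epsilon>}) \<longlonglongrightarrow> 0"
proof (intro allI impI)
  fix \<epsilon> :: real assume \<epsilon>: "0 < \<epsilon>"
  have process: "branching_immigration (M n) (xi n) (eta n) (p n) (q n)" for n
    unfolding branching_immigration_def branching_immigration_axioms_def
    using prob indep distr_xi distr_eta mean_xi_finite mean_eta_finite by auto
  have c: "filterlim c at_top sequentially"
    by (rule filterlim_at_top_if_real_div_square_convergent[OF c_pos C2])
  have c_n: "(\<lambda>n. c n / real n) \<longlonglongrightarrow> 0"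
    using tendsto_inverse_0_at_top[OF C1] by simp
  obtain KG where "\<forall>\<^sub>F n in sequentially. \<forall>x\<in>{0..1}. \<forall>y\<in>{0..1}. \<bar>G n x - G n y\<bar> \<le> KG * \<bar>x - y\<bar>"
    using D2_lip by blast
  then have gap_p: "\<forall>\<^sub>F n in sequentially. measure_pmf.expectation (p n) (pgf_gap (1 / c n)) \<le> max KG 0 / (real n)\<^sup>2"
    using eventually_gt_at_top[of 0]
    by (intro eventually_expectation_pgf_gap_le[OF mean_xi_finite c]) (auto simp: G_def m_def elim: eventually_mono)
  obtain KH where "\<forall>\<^sub>F n in sequentially. \<forall>x\<in>{0..1}. \<forall>y\<in>{0..1}. \<bar>H n x - H n y\<bar> \<le> KH * \<bar>x - y\<bar>"
    using E2_lip by blast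
  then have gap_q: "\<forall>\<^sub>F n in sequentially. measure_pmf.expectation (q n) (pgf_gap (1 / c n)) \<le> max KH 0 / real n"
    using eventually_gt_at_top[of 0]
    by (intro eventually_expectation_pgf_gap_le[OF mean_eta_finite c]) (auto simp: H_def \<omega>n_def elim: eventually_mono)
  have "(\<lambda>n. real n * (pmean (p n) - 1)) \<longlonglongrightarrow> a" "(\<lambda>n. pmean (q n)) \<longlonglongrightarrow> \<omega>"
    using D1 E1 by (simp_all add: m_def \<omega>n_def[abs_def])
  from tendsto_prob_normalised_sum_increment_squares[OF process c c_n this gap_p gap_q _ _ \<epsilon>]
  show "(\<lambda>n. measure (M n) {x \<in> space (M n). \<bar>(1 / (real n * c n)) * (\<Sum>k\<in>{1..n}.
      (real (bpi (xi n) (eta n) k x) - m n * real (bpi (xi n) (eta n) (k - 1) x) - \<omega>n n)\<^sup>2)\<bar> > \<epsilon>})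
    \<longlonglongrightarrow> 0"
    by (simp add: m_def \<omega>n_def)
qed

end
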